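(* Let $(G,N,\theta)_{\mathcal H}$ and $(H,M,\varphi)_{\mathcal H}$ be $\mathcal H$-triples with $(G,N,\theta)_{\mathcal H}\ge_c(H,M,\varphi)_{\mathcal H}$. Let $\epsilon:G\to\mathrm{Aut}(N)$ be the homomorphism given by conjugation. Suppose that $N\trianglelefteq\hat G$ for a finite group $\hat G$ and that $\hat\epsilon(\hat G)=\epsilon(G)$, where $\hat\epsilon:\hat G\to\mathrm{Aut}(N)$ is given by conjugation. Let $\hat H$ be a subgroup with $M\,\mathbf C_{\hat G}(N)\subseteq\hat H\le\hat G$ and $\hat\epsilon(\hat H)=\epsilon(H)$. Then $(\hat G,N,\theta)_{\mathcal H}\ge_c(\hat H,M,\varphi)_{\mathcal H}$.
   Context: All groups are finite; $p$ is a fixed prime. $\mathbb Q^{\mathrm{ab}}\subseteq\mathbb C$ is generated by all roots of unity, $\mathcal G=\mathrm{Gal}(\mathbb Q^{\mathrm{ab}}/\mathbb Q)$, $\mathcal H\le\mathcal G$ consists of those $\sigma$ for which there is an integer $f$ with $\sigma(\xi)=\xi^{p^f}$ for all roots of unity $\xi$ of order prime to $p$. For $N\trianglelefteq G$, $\theta\in\mathrm{Irr}(N)$, $g\in G$, $\sigma\in\mathcal G$: $\theta^{g\sigma}(n)=\sigma(\theta(gng^{-1}))$; $A_\theta$ the stabilizer in $A\le G\times\mathcal G$; $\theta^{\mathcal H}$ the $\mathcal H$-orbit; $G_{\theta^{\mathcal H}}=\{g:\theta^g\in\theta^{\mathcal H}\}$. $(G,N,\theta)_{\mathcal H}$ is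 an $\mathcal H$-triple if $N\trianglelefteq G$, $\theta\in\mathrm{Irr}(N)$, $G_{\theta^{\mathcal H}}=G$. Projective representation $\mathcal P$ with factor set $\alpha$: $\mathcal P(x)\mathcal P(y)=\alpha(x,y)\mathcal P(xy)$. For $G$-invariant $\theta$, $\mathcal P$ is associated with $\theta$ if $\mathcal P_N$ affords $\theta$ and $\mathcal P(ng)=\mathcal P(n)\mathcal P(g)$, $\mathcal P(gn)=\mathcal P(g)\mathcal P(n)$. $\mathcal Q\sim\mu\mathcal P$ means $\mathcal Q(x)=\mu(x)M^{-1}\mathcal P(x)M$ for fixed invertible $M$. For $\mathcal P$ associated with $\theta$ on $G_\theta$ with entries in $\mathbb Q^{\mathrm{ab}}$ and $\theta^{x\sigma}=\theta$: $\mathcal P^{x\sigma}(y)=\sigma(\mathcal P(xyx^{-1}))$, and $\mu_{x\sigma}$ is the unique function $G_\theta\to\mathbb C^\times$, constant on $N$-cosets, $\mu_{x\sigma}(1)=1$, with $\mathcal P^{x\sigma}\sim\mu_{x\sigma}\mathcal P$. $(G,N,\theta)_{\mathcal H}\ge_c(H,M,\varphi)_{\mathcal H}$ (both $\mathcal H$-triples, $H\le G$) means: (i) $G=NH$, $N\cap H=M$, $\mathbf C_G(N)\subseteq H$; (ii) $(H\times\mathcal H)_\theta=(H\times\mathcal H)_\varphi$; (iii) there are projective representations $\mathcal P$ of $G_\theta$ associated with $\theta$ and $\mathcal P'$ of $H_\varphi$ associated with $\varphi$, entries in $\mathbb Q^{\mathrm{ab}}$, factor sets with root-of-unity values agreeing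 on $H_\theta\times H_\theta$, and $\mathcal P(c),\mathcal P'(c)$ the same scalar for all $c\in\mathbf C_G(N)$; (iv) $\mu_a=\mu'_a$ on $H_\theta$ for all $a\in(H\times\mathcal H)_\theta$. *)

theory Defs
  imports "Jordan_Normal_Form.Matrix" "HOL-Algebra.Coset"
begin

inductive_set Qab :: "complex set" where
  root: "n > 0 \<Longrightarrow> z ^ n = 1 \<Longrightarrow> z \<in> Qab"
| add: "x \<in> Qab \<Longrightarrow> y \<in> Qab \<Longrightarrow> x + y \<in> Qab"
| mult: "x \<in> Qab \<Longrightarrow> y \<in> Qab \<Longrightarrow> x * y \<in> Qab"
| uminus: "x \<in> Qab \<Longrightarrow> - x \<in> Qab"
| inverse: "x \<in> Qab \<Longrightarrow> inverse x \<in> Qab"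

text \<open>Elements of Gal(Q^ab/Q), represented by functions complex => complex whose
  restriction to Q^ab is a field automorphism of Q^ab (values outside Q^ab are irrelevant).\<close>
definition galQab :: "(complex \<Rightarrow> complex) set" where
  "galQab = {\<sigma>. bij_betw \<sigma> Qab Qab \<and>
     (\<forall>x\<in>Qab. \<forall>y\<in>Qab. \<sigma> (x + y) = \<sigma> x + \<sigma> y \<and> \<sigma> (x * y) = \<sigma> x * \<sigma> y)}"

definition root_of_unity :: "complex \<Rightarrow> bool" where
  "root_of_unity z \<longleftrightarrow> (\<exists>n>0. z ^ n = 1)"

definition p'_root :: "nat \<Rightarrow> complex \<Rightarrow> bool" where
  "p'_root p \<xi> \<longleftrightarrow> (\<exists>n>0. \<xi> ^ n = 1 \<and> coprime n p)"

text \<open>The subgroup calH: sigma acts on p'-roots of unity as xi |-> xi^(p^f) for an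
  integer f; for f < 0 this means that (sigma xi)^(p^(-f)) = xi.\<close>
definition calH :: "nat \<Rightarrow> (complex \<Rightarrow> complex) set" where
  "calH p = {\<sigma> \<in> galQab. \<exists>f::int. \<forall>\<xi>. p'_root p \<xi> \<longrightarrow>
      (if f \<ge> 0 then \<sigma> \<xi> = \<xi> ^ (p ^ nat f) else (\<sigma> \<xi>) ^ (p ^ nat (- f)) = \<xi>)}"

definition conjg :: "('a, 'b) monoid_scheme \<Rightarrow> 'a \<Rightarrow> 'a \<Rightarrow> 'a" where
  "conjg G g n = g \<otimes>\<^bsub>G\<^esub> n \<otimes>\<^bsub>G\<^esub> inv\<^bsub>G\<^esub> g"

definition centralizer_in :: "('a, 'b) monoid_scheme \<Rightarrow> 'a set \<Rightarrow> 'a set" where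
  "centralizer_in G N = {g \<in> carrier G. \<forall>n\<in>N. g \<otimes>\<^bsub>G\<^esub> n = n \<otimes>\<^bsub>G\<^esub> g}"

text \<open>epsilon(X): the automorphisms of N induced by conjugation by elements of X.\<close>
definition conj_image :: "('a, 'b) monoid_scheme \<Rightarrow> 'a set \<Rightarrow> 'a set \<Rightarrow> ('a \<Rightarrow> 'a) set" where
  "conj_image G N X = (\<lambda>g. restrict (conjg G g) N) ` X"

definition mat_trace :: "complex mat \<Rightarrow> complex" where
  "mat_trace A = (\<Sum>i<dim_row A. A $$ (i, i))"

definition is_rep :: "('a, 'b) monoid_scheme \<Rightarrow> 'a set \<Rightarrow> nat \<Rightarrow> ('a \<Rightarrow> complex mat) \<Rightarrow> bool" where
  "is_rep G N d \<rho> \<longleftrightarrow> (\<forall>x\<in>N. \<rho> x \<in> carrier_mat d d) \<and> \<rho> \<one>\<^bsub>G\<^esub> = 1\<^sub>m d \<and>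
     (\<forall>x\<in>N. \<forall>y\<in>N. \<rho> (x \<otimes>\<^bsub>G\<^esub> y) = \<rho> x * \<rho> y)"

definition invariant_subspace :: "'a set \<Rightarrow> nat \<Rightarrow> ('a \<Rightarrow> complex mat) \<Rightarrow> complex vec set \<Rightarrow> bool" where
  "invariant_subspace N d \<rho> W \<longleftrightarrow> W \<subseteq> carrier_vec d \<and> 0\<^sub>v d \<in> W \<and>
     (\<forall>v\<in>W. \<forall>w\<in>W. v + w \<in> W) \<and> (\<forall>c. \<forall>v\<in>W. c \<cdot>\<^sub>v v \<in> W) \<and>
     (\<forall>x\<in>N. \<forall>v\<in>W. \<rho> x *\<^sub>v v \<in> W)"

definition irreducible_rep :: "('a, 'b) monoid_scheme \<Rightarrow> 'a set \<Rightarrow> nat \<Rightarrow> ('a \<Rightarrow> complex mat) \<Rightarrow> bool" where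
  "irreducible_rep G N d \<rho> \<longleftrightarrow> d > 0 \<and> is_rep G N d \<rho> \<and>
     (\<forall>W. invariant_subspace N d \<rho> W \<longrightarrow> W = {0\<^sub>v d} \<or> W = carrier_vec d)"

text \<open>theta in Irr(N): the character of an irreducible complex representation of N
  (only the values of theta on N matter).\<close>
definition irr_char :: "('a, 'b) monoid_scheme \<Rightarrow> 'a set \<Rightarrow> ('a \<Rightarrow> complex) \<Rightarrow> bool" where
  "irr_char G N \<theta> \<longleftrightarrow> (\<exists>d \<rho>. irreducible_rep G N d \<rho> \<and> (\<forall>n\<in>N. \<theta> n = mat_trace (\<rho> n)))"

text \<open>calH-triple (G,N,theta): N normal in G, theta in Irr(N), G_{theta^calH} = G.\<close>
definition H_triple :: "nat \<Rightarrow> ('a, 'b) monoid_scheme \<Rightarrow> 'a set \<Rightarrow> ('a \<Rightarrow> complex) \<Rightarrow> bool" where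
  "H_triple p G N \<theta> \<longleftrightarrow> N \<lhd> G \<and> irr_char G N \<theta> \<and>
     (\<forall>g\<in>carrier G. \<exists>\<sigma>\<in>calH p. \<forall>n\<in>N. \<theta> (conjg G g n) = \<sigma> (\<theta> n))"

definition stab :: "('a, 'b) monoid_scheme \<Rightarrow> 'a set \<Rightarrow> ('a \<Rightarrow> complex) \<Rightarrow> 'a set" where
  "stab G N \<theta> = {g \<in> carrier G. \<forall>n\<in>N. \<theta> (conjg G g n) = \<theta> n}"

text \<open>(H x calH)_theta, where theta^{h sigma}(n) = sigma(theta(h n h^-1)).\<close>
definition stab_pairs :: "nat \<Rightarrow> 'a set \<Rightarrow> ('a, 'b) monoid_scheme \<Rightarrow> 'a set \<Rightarrow> ('a \<Rightarrow> complex)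
    \<Rightarrow> ('a \<times> (complex \<Rightarrow> complex)) set" where
  "stab_pairs p H G N \<theta> = {(h, \<sigma>). h \<in> H \<and> \<sigma> \<in> calH p \<and> (\<forall>n\<in>N. \<sigma> (\<theta> (conjg G h n)) = \<theta> n)}"

definition assoc_proj :: "('a, 'b) monoid_scheme \<Rightarrow> 'a set \<Rightarrow> ('a \<Rightarrow> complex) \<Rightarrow> nat
    \<Rightarrow> ('a \<Rightarrow> complex mat) \<Rightarrow> ('a \<Rightarrow> 'a \<Rightarrow> complex) \<Rightarrow> bool" where
  "assoc_proj G N \<theta> d P \<alpha> \<longleftrightarrow>
     (\<forall>x\<in>stab G N \<theta>. P x \<in> carrier_mat d d \<and> invertible_mat (P x) \<and>
        (\<forall>i<d. \<forall>j<d. P x $$ (i, j) \<in> Qab)) \<and>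
     (\<forall>x\<in>stab G N \<theta>. \<forall>y\<in>stab G N \<theta>. \<alpha> x y \<noteq> 0 \<and> P x * P y = \<alpha> x y \<cdot>\<^sub>m P (x \<otimes>\<^bsub>G\<^esub> y)) \<and>
     is_rep G N d P \<and> (\<forall>n\<in>N. mat_trace (P n) = \<theta> n) \<and>
     (\<forall>n\<in>N. \<forall>g\<in>stab G N \<theta>. P (n \<otimes>\<^bsub>G\<^esub> g) = P n * P g \<and> P (g \<otimes>\<^bsub>G\<^esub> n) = P g * P n)"

text \<open>mu is the function mu_{x sigma}: defined on G_theta, nonzero, constant on N-cosets,
  mu(1) = 1, and P^{x sigma} ~ mu P.\<close>
definition is_mu :: "('a, 'b) monoid_scheme \<Rightarrow> 'a set \<Rightarrow> ('a \<Rightarrow> complex) \<Rightarrow> nat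
    \<Rightarrow> ('a \<Rightarrow> complex mat) \<Rightarrow> 'a \<Rightarrow> (complex \<Rightarrow> complex) \<Rightarrow> ('a \<Rightarrow> complex) \<Rightarrow> bool" where
  "is_mu G N \<theta> d P x \<sigma> \<mu> \<longleftrightarrow>
     (\<forall>y\<in>stab G N \<theta>. \<mu> y \<noteq> 0) \<and>
     (\<forall>y\<in>stab G N \<theta>. \<forall>n\<in>N. \<mu> (n \<otimes>\<^bsub>G\<^esub> y) = \<mu> y) \<and>
     \<mu> \<one>\<^bsub>G\<^esub> = 1 \<and>
     (\<exists>A B. A \<in> carrier_mat d d \<and> B \<in> carrier_mat d d \<and> A * B = 1\<^sub>m d \<and> B * A = 1\<^sub>m d \<and>
        (\<forall>y\<in>stab G N \<theta>. map_mat \<sigma> (P (conjg G x y)) = \<mu> y \<cdot>\<^sub>m (B * P y * A)))"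

definition geq_c :: "nat \<Rightarrow> ('a, 'b) monoid_scheme \<Rightarrow> 'a set \<Rightarrow> ('a \<Rightarrow> complex)
    \<Rightarrow> 'a set \<Rightarrow> 'a set \<Rightarrow> ('a \<Rightarrow> complex) \<Rightarrow> bool" where
  "geq_c p G N \<theta> H M \<phi> \<longleftrightarrow>
     H_triple p G N \<theta> \<and> subgroup H G \<and> H_triple p (G\<lparr>carrier := H\<rparr>) M \<phi> \<and>
     N <#>\<^bsub>G\<^esub> H = carrier G \<and> N \<inter> H = M \<and> centralizer_in G N \<subseteq> H \<and>
     stab_pairs p H G N \<theta> = stab_pairs p H G M \<phi> \<and>
     (\<exists>d P \<alpha> d' P' \<alpha>'.
        assoc_proj G N \<theta> d P \<alpha> \<and> assoc_proj (G\<lparr>carrier := H\<rparr>) M \<phi> d' P' \<alpha>' \<and>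
        (\<forall>x\<in>stab G N \<theta>. \<forall>y\<in>stab G N \<theta>. root_of_unity (\<alpha> x y)) \<and>
        (\<forall>x\<in>stab (G\<lparr>carrier := H\<rparr>) M \<phi>. \<forall>y\<in>stab (G\<lparr>carrier := H\<rparr>) M \<phi>. root_of_unity (\<alpha>' x y)) \<and>
        (\<forall>x\<in>H \<inter> stab G N \<theta>. \<forall>y\<in>H \<inter> stab G N \<theta>. \<alpha> x y = \<alpha>' x y) \<and>
        (\<forall>c\<in>centralizer_in G N. \<exists>\<zeta>. P c = \<zeta> \<cdot>\<^sub>m 1\<^sub>m d \<and> P' c = \<zeta> \<cdot>\<^sub>m 1\<^sub>m d') \<and>
        (\<forall>(x, \<sigma>)\<in>stab_pairs p H G N \<theta>. \<forall>\<mu> \<mu>'.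
            is_mu G N \<theta> d P x \<sigma> \<mu> \<longrightarrow> is_mu (G\<lparr>carrier := H\<rparr>) M \<phi> d' P' x \<sigma> \<mu>' \<longrightarrow>
            (\<forall>y\<in>H \<inter> stab G N \<theta>. \<mu> y = \<mu>' y)))"

end

theory Submission
  imports Defs "HOL-Algebra.Multiplicative_Group"
begin

text \<open>
  Conjugation identifies the actions of \<open>G\<close> and \<open>Gh\<close> on \<open>N\<close>, so every \<open>g \<in> Gh\<close> has a partner
  \<open>\<tau> g \<in> G\<close> acting on \<open>N\<close> in the same way, and \<open>\<tau>\<close> can be chosen with \<open>\<tau> (n g) = n \<tau> g\<close> for
  \<open>n \<in> N\<close> and \<open>\<tau> Hh \<subseteq> H\<close>. Then \<open>P \<circ> \<tau>\<close> and \<open>P' \<circ> \<tau>\<close> are projective representations of the inertia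
  groups in \<open>Gh\<close> and \<open>Hh\<close> associated with \<open>\<theta>\<close> and \<open>\<phi>\<close>. The map \<open>\<tau>\<close> is multiplicative only up to
  elements of \<open>C_G(N)\<close>, but there \<open>P\<close> and \<open>P'\<close> are the same scalar, a root of unity. Hence the
  factor sets and the functions \<open>\<mu>\<close> of the two lifts arise from those of \<open>P\<close> and \<open>P'\<close> by the same
  correction factors, and all conditions of \<open>\<ge>\<^sub>c\<close> carry over.
\<close>

lemma Qab_one: "1 \<in> Qab"
  by (rule Qab.root[of 1]) auto

lemma Qab_zero: "0 \<in> Qab"
  using Qab.add[OF Qab_one Qab.uminus[OF Qab_one]] by simp

lemma Qab_sum: "(\<And>i. i \<in> A \<Longrightarrow> f i \<in> Qab) \<Longrightarrow> sum f A \<in> Qab"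
  by (induction A rule: infinite_finite_induct) (auto intro: Qab_zero Qab.add)

lemma root_of_unity_in_Qab: "root_of_unity z \<Longrightarrow> z \<in> Qab"
  unfolding root_of_unity_def using Qab.root by blast

lemma root_of_unity_one: "root_of_unity 1"
  unfolding root_of_unity_def by auto

lemma root_of_unity_nonzero: "root_of_unity z \<Longrightarrow> z \<noteq> 0"
  unfolding root_of_unity_def by (metis power_0_left zero_neq_one less_not_refl)

lemma root_of_unity_mult:
  assumes "root_of_unity a" "root_of_unity b"
  shows "root_of_unity (a * b)"
proof -
  obtain n m where nm: "n > 0" "a ^ n = 1" "m > 0" "b ^ m = 1"
    using assms unfolding root_of_unity_def by blast
  have "(a * b) ^ (n * m) = (a ^ n) ^ m * (b ^ m) ^ n"
    by (simp add: power_mult_distrib flip: power_mult) (simp add: mult.commute)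
  then show ?thesis
    unfolding root_of_unity_def using nm by (intro exI[of _ "n * m"]) simp
qed

lemma root_of_unity_divide:
  assumes "root_of_unity a" "root_of_unity b"
  shows "root_of_unity (a / b)"
proof -
  have "root_of_unity (inverse b)"
    using assms(2) unfolding root_of_unity_def by (metis power_inverse inverse_1)
  then show ?thesis
    using root_of_unity_mult[OF assms(1)] by (simp add: divide_inverse)
qed

lemma root_of_unity_of_power: "n > 0 \<Longrightarrow> root_of_unity (z ^ n) \<Longrightarrow> root_of_unity z"
  unfolding root_of_unity_def by (metis nat_0_less_mult_iff power_mult)

definition Qab_mat :: "nat \<Rightarrow> complex mat \<Rightarrow> bool" where
  "Qab_mat d A \<longleftrightarrow> A \<in> carrier_mat d d \<and> (\<forall>i<d. \<forall>j<d. A $$ (i, j) \<in> Qab)"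

context
  fixes \<sigma> :: "complex \<Rightarrow> complex"
  assumes \<sigma>: "\<sigma> \<in> galQab"
begin

lemma galQab_add: "x \<in> Qab \<Longrightarrow> y \<in> Qab \<Longrightarrow> \<sigma> (x + y) = \<sigma> x + \<sigma> y"
  using \<sigma> unfolding galQab_def by blast

lemma galQab_mult: "x \<in> Qab \<Longrightarrow> y \<in> Qab \<Longrightarrow> \<sigma> (x * y) = \<sigma> x * \<sigma> y"
  using \<sigma> unfolding galQab_def by blast

lemma galQab_inj: "x \<in> Qab \<Longrightarrow> y \<in> Qab \<Longrightarrow> \<sigma> x = \<sigma> y \<Longrightarrow> x = y"
  using \<sigma> unfolding galQab_def bij_betw_def inj_on_def by blast

lemma galQab_zero: "\<sigma> 0 = 0"
  using galQab_add[OF Qab_zero Qab_zero] by simp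

lemma galQab_nonzero: "x \<in> Qab \<Longrightarrow> x \<noteq> 0 \<Longrightarrow> \<sigma> x \<noteq> 0"
  using galQab_inj[OF _ Qab_zero] galQab_zero by metis

lemma galQab_sum: "(\<And>i. i \<in> A \<Longrightarrow> f i \<in> Qab) \<Longrightarrow> \<sigma> (sum f A) = (\<Sum>i\<in>A. \<sigma> (f i))"
  by (induction A rule: infinite_finite_induct) (auto simp: galQab_zero galQab_add Qab_sum)

lemma map_mat_galQab_mult:
  "Qab_mat d A \<Longrightarrow> Qab_mat d B \<Longrightarrow> map_mat \<sigma> (A * B) = map_mat \<sigma> A * map_mat \<sigma> B"
  unfolding Qab_mat_def
  by (intro eq_matI)
    (auto simp: scalar_prod_def galQab_sum galQab_mult intro!: Qab.mult sum.cong trans[OF galQab_sum])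

lemma map_mat_galQab_smult:
  "k \<in> Qab \<Longrightarrow> Qab_mat d A \<Longrightarrow> map_mat \<sigma> (k \<cdot>\<^sub>m A) = \<sigma> k \<cdot>\<^sub>m map_mat \<sigma> A"
  unfolding Qab_mat_def by (intro eq_matI) (auto simp: galQab_mult)

lemma map_mat_galQab_nonzero:
  assumes "Qab_mat d A" "A \<noteq> 0\<^sub>m d d"
  shows "map_mat \<sigma> A \<noteq> 0\<^sub>m d d"
proof
  assume "map_mat \<sigma> A = 0\<^sub>m d d"
  then have "A $$ (i, j) = 0" if "i < d" "j < d" for i j
    using that assms(1) galQab_inj[OF _ Qab_zero] galQab_zero unfolding Qab_mat_def
    by (metis carrier_matD index_map_mat(1) index_zero_mat(1))
  then show False
    using assms unfolding Qab_mat_def by (auto intro!: eq_matI)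
qed

end

lemma smult_smult_mat: "a \<cdot>\<^sub>m (b \<cdot>\<^sub>m A) = (a * b) \<cdot>\<^sub>m (A :: 'a :: semigroup_mult mat)"
  by (intro eq_matI) (auto simp: mult.assoc)

lemma one_smult_mat: "1 \<cdot>\<^sub>m A = (A :: 'a :: monoid_mult mat)"
  by (intro eq_matI) auto

lemma smult_mat_solve:
  fixes M N :: "'a :: field mat"
  shows "r \<noteq> 0 \<Longrightarrow> r \<cdot>\<^sub>m M = N \<Longrightarrow> M = (1 / r) \<cdot>\<^sub>m N"
  by (auto simp: smult_smult_mat one_smult_mat)

lemma smult_mat_cancel:
  fixes A :: "'a :: idom mat"
  assumes A: "A \<in> carrier_mat n m" "A \<noteq> 0\<^sub>m n m" and eq: "k \<cdot>\<^sub>m A = k' \<cdot>\<^sub>m A"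
  shows "k = k'"
proof -
  obtain i j where ij: "i < n" "j < m" "A $$ (i, j) \<noteq> 0"
    using A by (metis carrier_matD eq_matI index_zero_mat)
  have "k * A $$ (i, j) = k' * A $$ (i, j)"
    using arg_cong[OF eq, of "\<lambda>B. B $$ (i, j)"] ij A(1) by auto
  then show ?thesis
    using ij(3) by simp
qed

lemma invertible_mat_nonzero:
  fixes A :: "'a :: semiring_1 mat"
  assumes "invertible_mat A" "A \<in> carrier_mat d d" "d > 0"
  shows "A \<noteq> 0\<^sub>m d d"
proof
  assume A0: "A = 0\<^sub>m d d"
  obtain B where AB: "A * B = 1\<^sub>m d" and BA: "B * A = 1\<^sub>m (dim_row B)"
    using assms(1,2) unfolding invertible_mat_def inverts_mat_def by auto
  have "B \<in> carrier_mat d d"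
    using arg_cong[OF AB, of dim_col] arg_cong[OF BA, of dim_col] assms(2) by auto
  then have "A * B = 0\<^sub>m d d"
    using A0 by simp
  then show False
    using arg_cong[OF AB, of "\<lambda>X. X $$ (0, 0)"] assms(3) by simp
qed

lemma mat_trace_mult_comm:
  fixes A B :: "complex mat"
  assumes "A \<in> carrier_mat d d" "B \<in> carrier_mat d d"
  shows "mat_trace (A * B) = mat_trace (B * A)"
proof -
  have "mat_trace (A * B) = (\<Sum>i<d. \<Sum>k<d. A $$ (i, k) * B $$ (k, i))"
    using assms unfolding mat_trace_def
    by (intro sum.cong) (auto simp: scalar_prod_def atLeast0LessThan)
  also have "\<dots> = (\<Sum>k<d. \<Sum>i<d. B $$ (k, i) * A $$ (i, k))"
    by (subst sum.swap) (simp add: mult.commute)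
  also have "\<dots> = mat_trace (B * A)"
    using assms unfolding mat_trace_def
    by (intro sum.cong) (auto simp: scalar_prod_def atLeast0LessThan)
  finally show ?thesis .
qed

lemma sandwich_smult:
  fixes A B M :: "'a :: comm_ring_1 mat"
  assumes "A \<in> carrier_mat d d" "B \<in> carrier_mat d d" "M \<in> carrier_mat d d"
  shows "B * (k \<cdot>\<^sub>m M) * A = k \<cdot>\<^sub>m (B * M * A)"
proof -
  have "B * (k \<cdot>\<^sub>m M) = k \<cdot>\<^sub>m (B * M)"
    using mult_smult_distrib assms by blast
  then show ?thesis
    using mult_smult_assoc_mat[of "B * M" d d A d] assms by simp
qed

context
  fixes A B :: "'a :: comm_ring_1 mat" and d :: nat
  assumes A: "A \<in> carrier_mat d d" and B: "B \<in> carrier_mat d d" and AB: "A * B = 1\<^sub>m d"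
begin

lemma sandwich_mult:
  assumes "M1 \<in> carrier_mat d d" "M2 \<in> carrier_mat d d"
  shows "(B * M1 * A) * (B * M2 * A) = B * (M1 * M2) * A"
proof -
  have "(B * M1 * A) * (B * M2 * A) = B * M1 * (A * B) * M2 * A"
    using A B assms by (simp add: assoc_mult_mat[of _ d d _ d _ d])
  then show ?thesis
    using A B AB assms by (simp add: assoc_mult_mat[of _ d d _ d _ d])
qed

lemma unsandwich:
  assumes "M \<in> carrier_mat d d"
  shows "A * (B * M * A) * B = M"
proof -
  have "A * (B * M * A) * B = (A * B) * M * (A * B)"
    using A B assms by (simp add: assoc_mult_mat[of _ d d _ d _ d])
  then show ?thesis
    using AB assms by simp
qed

end

context group
begin

lemma conjg_closed [simp]: "g \<in> carrier G \<Longrightarrow> n \<in> carrier G \<Longrightarrow> conjg G g n \<in> carrier G"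
  by (simp add: conjg_def)

lemma conjg_one [simp]: "n \<in> carrier G \<Longrightarrow> conjg G \<one> n = n"
  by (simp add: conjg_def)

lemma conjg_mult:
  "a \<in> carrier G \<Longrightarrow> b \<in> carrier G \<Longrightarrow> n \<in> carrier G \<Longrightarrow> conjg G (a \<otimes> b) n = conjg G a (conjg G b n)"
  by (simp add: conjg_def m_assoc inv_mult_group)

lemma conjg_inv_conjg [simp]:
  "a \<in> carrier G \<Longrightarrow> n \<in> carrier G \<Longrightarrow> conjg G (inv a) (conjg G a n) = n"
  by (simp add: conjg_def m_assoc flip: m_assoc[of "inv a" a])

lemma conjg_conjg_inv [simp]:
  "a \<in> carrier G \<Longrightarrow> n \<in> carrier G \<Longrightarrow> conjg G a (conjg G (inv a) n) = n"
  by (simp add: conjg_def m_assoc flip: m_assoc[of a "inv a"])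

lemma conjg_m_mult:
  "g \<in> carrier G \<Longrightarrow> a \<in> carrier G \<Longrightarrow> b \<in> carrier G \<Longrightarrow> conjg G g (a \<otimes> b) = conjg G g a \<otimes> conjg G g b"
  by (simp add: conjg_def m_assoc flip: m_assoc[of "inv g" g])

lemma conjg_conjg:
  "a \<in> carrier G \<Longrightarrow> b \<in> carrier G \<Longrightarrow> n \<in> carrier G \<Longrightarrow>
    conjg G (conjg G a b) n = conjg G a (conjg G b (conjg G (inv a) n))"
  by (simp add: conjg_def m_assoc inv_mult_group)

lemma mult_conjg_commute: "g \<in> carrier G \<Longrightarrow> k \<in> carrier G \<Longrightarrow> g \<otimes> k = conjg G g k \<otimes> g"
  by (simp add: conjg_def m_assoc)

lemma conjg_subgroup:
  "subgroup H G \<Longrightarrow> x \<in> H \<Longrightarrow> conjg (G\<lparr>carrier := H\<rparr>) x y = conjg G x y"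
  unfolding conjg_def using m_inv_consistent by simp

lemma centralizer_in_conjg:
  "N \<subseteq> carrier G \<Longrightarrow> c \<in> centralizer_in G N \<Longrightarrow> n \<in> N \<Longrightarrow> conjg G c n = n"
  unfolding centralizer_in_def conjg_def by (auto simp: m_assoc)

lemma one_in_centralizer_in: "N \<subseteq> carrier G \<Longrightarrow> \<one> \<in> centralizer_in G N"
  by (auto simp: centralizer_in_def)

lemma conjg_fixed_imp_commute:
  "c \<in> carrier G \<Longrightarrow> n \<in> carrier G \<Longrightarrow> conjg G c n = n \<Longrightarrow> c \<otimes> n = n \<otimes> c"
  unfolding conjg_def by (metis inv_solve_right m_closed inv_closed)

lemma same_action_imp_centralizer_in:
  assumes a: "a \<in> carrier G" and b: "b \<in> carrier G" and N: "N \<subseteq> carrier G"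
    and same: "\<And>n. n \<in> N \<Longrightarrow> conjg G a n = conjg G b n"
  shows "inv a \<otimes> b \<in> centralizer_in G N"
proof -
  have "conjg G (inv a \<otimes> b) n = n" if n: "n \<in> N" for n
  proof -
    have "conjg G (inv a \<otimes> b) n = conjg G (inv a) (conjg G a n)"
      using a b N n same[OF n] by (auto simp: conjg_mult)
    then show ?thesis
      using a N n by auto
  qed
  then show ?thesis
    using a b N unfolding centralizer_in_def by (auto intro!: conjg_fixed_imp_commute)
qed

lemma stab_subgroup:
  assumes N: "N \<lhd> G"
  shows "subgroup (stab G N \<theta>) G"
proof (rule subgroupI)
  have N_carrier: "n \<in> carrier G" if "n \<in> N" for n
    using N that by (meson normal_imp_subgroup subgroup.mem_carrier)
  have conjg_N: "conjg G g n \<in> N" if "g \<in> carrier G" "n \<in> N" for g n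
    unfolding conjg_def using normal.inv_op_closed2[OF N] that .
  show "stab G N \<theta> \<subseteq> carrier G" "stab G N \<theta> \<noteq> {}"
    using N_carrier by (auto simp: stab_def intro!: exI[of _ \<one>])
  fix g h
  assume g: "g \<in> stab G N \<theta>" and h: "h \<in> stab G N \<theta>"
  then have gh: "g \<in> carrier G" "h \<in> carrier G"
    by (auto simp: stab_def)
  have "\<theta> (conjg G (inv g) n) = \<theta> n" if n: "n \<in> N" for n
  proof -
    have "conjg G (inv g) n \<in> N"
      using conjg_N gh n by simp
    then have "\<theta> (conjg G g (conjg G (inv g) n)) = \<theta> (conjg G (inv g) n)"
      using g by (simp add: stab_def)
    then show ?thesis
      using gh N_carrier[OF n] by simp
  qed
  then show "inv g \<in> stab G N \<theta>"
    using gh by (simp add: stab_def)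
  have "\<theta> (conjg G (g \<otimes> h) n) = \<theta> n" if "n \<in> N" for n
    using g h conjg_N[of h n] that gh N_carrier by (simp add: stab_def conjg_mult)
  then show "g \<otimes> h \<in> stab G N \<theta>"
    using gh by (simp add: stab_def)
qed

end

locale common_normal_subgroup = G: group G + Gh: group Gh for G Gh :: "'a monoid" +
  fixes K :: "'a set"
  assumes normal_G: "K \<lhd> G" and normal_Gh: "K \<lhd> Gh"
    and mult_eq: "\<And>a b. a \<in> K \<Longrightarrow> b \<in> K \<Longrightarrow> a \<otimes>\<^bsub>Gh\<^esub> b = a \<otimes>\<^bsub>G\<^esub> b"
begin

lemma subgroup_G: "subgroup K G"
  using normal_imp_subgroup[OF normal_G] .

lemma subgroup_Gh: "subgroup K Gh"
  using normal_imp_subgroup[OF normal_Gh] .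

lemma carrier_G: "k \<in> K \<Longrightarrow> k \<in> carrier G"
  using subgroup.mem_carrier[OF subgroup_G] .

lemma carrier_Gh: "k \<in> K \<Longrightarrow> k \<in> carrier Gh"
  using subgroup.mem_carrier[OF subgroup_Gh] .

lemma conjg_closed_G: "g \<in> carrier G \<Longrightarrow> k \<in> K \<Longrightarrow> conjg G g k \<in> K"
  unfolding conjg_def using normal.inv_op_closed2[OF normal_G] .

lemma conjg_closed_Gh: "g \<in> carrier Gh \<Longrightarrow> k \<in> K \<Longrightarrow> conjg Gh g k \<in> K"
  unfolding conjg_def using normal.inv_op_closed2[OF normal_Gh] .

lemma one_eq: "\<one>\<^bsub>Gh\<^esub> = \<one>\<^bsub>G\<^esub>"
proof -
  have one: "\<one>\<^bsub>G\<^esub> \<in> K" "\<one>\<^bsub>G\<^esub> \<in> carrier Gh"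
    using subgroup.one_closed[OF subgroup_G] carrier_Gh by auto
  have "\<one>\<^bsub>G\<^esub> \<otimes>\<^bsub>Gh\<^esub> \<one>\<^bsub>G\<^esub> = \<one>\<^bsub>G\<^esub>"
    using mult_eq[OF one(1) one(1)] by simp
  then show ?thesis
    using Gh.l_cancel_one[OF one(2) one(2)] by metis
qed

lemma inv_eq: "k \<in> K \<Longrightarrow> inv\<^bsub>Gh\<^esub> k = inv\<^bsub>G\<^esub> k"
  using mult_eq[of "inv\<^bsub>G\<^esub> k" k] subgroup.m_inv_closed[OF subgroup_G] carrier_G carrier_Gh one_eq
  by (intro Gh.inv_equality) auto

lemma conjg_eq: "a \<in> K \<Longrightarrow> b \<in> K \<Longrightarrow> conjg Gh a b = conjg G a b"
  unfolding conjg_def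
  by (simp add: inv_eq mult_eq subgroup.m_closed[OF subgroup_G] subgroup.m_inv_closed[OF subgroup_G])

end

section \<open>Projective representations associated with a character\<close>

lemma irr_char_cong:
  assumes "\<one>\<^bsub>A\<^esub> = \<one>\<^bsub>B\<^esub>" "\<And>a b. a \<in> K \<Longrightarrow> b \<in> K \<Longrightarrow> a \<otimes>\<^bsub>A\<^esub> b = a \<otimes>\<^bsub>B\<^esub> b"
  shows "irr_char A K \<theta> = irr_char B K \<theta>"
proof -
  have "is_rep A K e \<rho> = is_rep B K e \<rho>" for e \<rho>
    unfolding is_rep_def using assms by simp
  then show ?thesis
    unfolding irr_char_def irreducible_rep_def by simp
qed

lemma assoc_proj_degree_pos:
  assumes "irr_char G N \<theta>" "assoc_proj G N \<theta> d P \<alpha>" "\<one>\<^bsub>G\<^esub> \<in> N"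
  shows "d > 0"
proof -
  obtain d0 \<rho> where \<rho>: "irreducible_rep G N d0 \<rho>" and \<theta>: "\<forall>n\<in>N. \<theta> n = mat_trace (\<rho> n)"
    using assms(1) unfolding irr_char_def by blast
  have "d0 > 0" "\<rho> \<one>\<^bsub>G\<^esub> = 1\<^sub>m d0"
    using \<rho> unfolding irreducible_rep_def is_rep_def by auto
  moreover have "P \<one>\<^bsub>G\<^esub> = 1\<^sub>m d" "mat_trace (P \<one>\<^bsub>G\<^esub>) = \<theta> \<one>\<^bsub>G\<^esub>"
    using assms(2,3) unfolding assoc_proj_def is_rep_def by auto
  ultimately show ?thesis
    using \<theta> assms(3) by (simp add: mat_trace_def)
qed

locale proj_rep = G: group G for G :: "'a monoid" +
  fixes K :: "'a set" and \<theta> :: "'a \<Rightarrow> complex" and d :: nat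
    and P :: "'a \<Rightarrow> complex mat" and \<alpha> :: "'a \<Rightarrow> 'a \<Rightarrow> complex"
  assumes K_normal: "K \<lhd> G" and P_assoc: "assoc_proj G K \<theta> d P \<alpha>" and d_pos: "d > 0"
begin

abbreviation "G\<theta> \<equiv> stab G K \<theta>"

lemma K_carrier: "k \<in> K \<Longrightarrow> k \<in> carrier G"
  using K_normal by (meson normal_imp_subgroup subgroup.mem_carrier)

lemma conjg_K: "g \<in> carrier G \<Longrightarrow> k \<in> K \<Longrightarrow> conjg G g k \<in> K"
  unfolding conjg_def using normal.inv_op_closed2[OF K_normal] .

lemma stab_carrier: "x \<in> G\<theta> \<Longrightarrow> x \<in> carrier G"
  by (simp add: stab_def)

lemma stab_subgroup: "subgroup G\<theta> G"
  using G.stab_subgroup[OF K_normal] .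

lemma P_carrier: "x \<in> G\<theta> \<Longrightarrow> P x \<in> carrier_mat d d"
  using P_assoc unfolding assoc_proj_def by blast

lemma P_Qab_mat: "x \<in> G\<theta> \<Longrightarrow> Qab_mat d (P x)"
  using P_assoc unfolding assoc_proj_def Qab_mat_def by blast

lemma P_invertible: "x \<in> G\<theta> \<Longrightarrow> invertible_mat (P x)"
  using P_assoc unfolding assoc_proj_def by blast

lemma P_nonzero: "x \<in> G\<theta> \<Longrightarrow> P x \<noteq> 0\<^sub>m d d"
  using P_assoc invertible_mat_nonzero d_pos unfolding assoc_proj_def by blast

lemma \<alpha>_nonzero: "x \<in> G\<theta> \<Longrightarrow> y \<in> G\<theta> \<Longrightarrow> \<alpha> x y \<noteq> 0"
  using P_assoc unfolding assoc_proj_def by blast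

lemma P_mult: "x \<in> G\<theta> \<Longrightarrow> y \<in> G\<theta> \<Longrightarrow> P x * P y = \<alpha> x y \<cdot>\<^sub>m P (x \<otimes>\<^bsub>G\<^esub> y)"
  using P_assoc unfolding assoc_proj_def by blast

lemma P_one: "P \<one>\<^bsub>G\<^esub> = 1\<^sub>m d"
  using P_assoc unfolding assoc_proj_def is_rep_def by blast

lemma P_mult_K_left: "n \<in> K \<Longrightarrow> g \<in> G\<theta> \<Longrightarrow> P (n \<otimes>\<^bsub>G\<^esub> g) = P n * P g"
  using P_assoc unfolding assoc_proj_def by blast

lemma P_mult_K_right: "n \<in> K \<Longrightarrow> g \<in> G\<theta> \<Longrightarrow> P (g \<otimes>\<^bsub>G\<^esub> n) = P g * P n"
  using P_assoc unfolding assoc_proj_def by blast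

lemma mat_trace_P: "n \<in> K \<Longrightarrow> mat_trace (P n) = \<theta> n"
  using P_assoc unfolding assoc_proj_def by blast

lemma \<theta>_conjg_K:
  assumes a: "a \<in> K" and n: "n \<in> K"
  shows "\<theta> (conjg G a n) = \<theta> n"
proof -
  have rep: "is_rep G K d P"
    using P_assoc unfolding assoc_proj_def by blast
  have a': "inv\<^bsub>G\<^esub> a \<in> K"
    using a K_normal by (meson normal_imp_subgroup subgroup.m_inv_closed)
  have car: "P k \<in> carrier_mat d d" if "k \<in> K" for k
    using rep that unfolding is_rep_def by blast
  have mult: "P (k \<otimes>\<^bsub>G\<^esub> l) = P k * P l" if "k \<in> K" "l \<in> K" for k l
    using rep that unfolding is_rep_def by blast
  have K_mult: "k \<otimes>\<^bsub>G\<^esub> l \<in> K" if "k \<in> K" "l \<in> K" for k l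
    using that K_normal by (meson normal_imp_subgroup subgroup.m_closed)
  have "\<theta> (conjg G a n) = mat_trace (P a * P n * P (inv\<^bsub>G\<^esub> a))"
    using mat_trace_P[OF conjg_K[OF K_carrier[OF a] n]] mult K_mult a a' n
    unfolding conjg_def by metis
  also have "\<dots> = mat_trace (P (inv\<^bsub>G\<^esub> a) * (P a * P n))"
    by (rule mat_trace_mult_comm[of _ d]) (use car a a' n in \<open>auto intro: mult_carrier_mat\<close>)
  also have "P (inv\<^bsub>G\<^esub> a) * (P a * P n) = P (inv\<^bsub>G\<^esub> a) * P a * P n"
    using car a a' n by (simp add: assoc_mult_mat[of _ d d _ d _ d])
  also have "P (inv\<^bsub>G\<^esub> a) * P a = 1\<^sub>m d"
    using mult[OF a' a] K_carrier[OF a] P_one by simp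
  finally show ?thesis
    using mat_trace_P[OF n] car[OF n] by simp
qed

lemma K_subset_stab: "K \<subseteq> G\<theta>"
  unfolding stab_def using \<theta>_conjg_K K_carrier by auto

lemma \<theta>_Qab: "n \<in> K \<Longrightarrow> \<theta> n \<in> Qab"
  using mat_trace_P[of n] P_Qab_mat[of n] K_subset_stab unfolding mat_trace_def Qab_mat_def
  by (metis (no_types, lifting) Qab_sum carrier_matD(1) lessThan_iff subsetD)

lemma conjg_stab:
  assumes \<sigma>: "\<sigma> \<in> galQab" and x: "x \<in> carrier G"
    and stable: "\<And>k. k \<in> K \<Longrightarrow> \<sigma> (\<theta> (conjg G x k)) = \<theta> k" and y: "y \<in> G\<theta>"
  shows "conjg G x y \<in> G\<theta>"
proof -
  have yc: "y \<in> carrier G"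
    using stab_carrier[OF y] .
  have "\<theta> (conjg G (conjg G x y) n) = \<theta> n" if n: "n \<in> K" for n
  proof -
    define m where "m = conjg G (inv\<^bsub>G\<^esub> x) n"
    have m: "m \<in> K" and xm: "conjg G x m = n"
      unfolding m_def using conjg_K x n K_carrier[OF n] by auto
    have "\<sigma> (\<theta> (conjg G (conjg G x y) n)) = \<theta> (conjg G y m)"
      using stable[OF conjg_K[OF yc m]] G.conjg_conjg[OF x yc K_carrier[OF n]] m_def by simp
    also have "\<dots> = \<theta> m"
      using y m unfolding stab_def by blast
    also have "\<dots> = \<sigma> (\<theta> n)"
      using stable[OF m] xm by simp
    finally show ?thesis
      using galQab_inj[OF \<sigma>] \<theta>_Qab conjg_K x yc n by simp
  qed
  then show ?thesis
    using x yc unfolding stab_def by simp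
qed

text \<open>\<open>P (c [^] n)\<close> differs from \<open>P c ^ n\<close> by a product of values of \<open>\<alpha>\<close>, and \<open>c [^] order G = \<one>\<close>.\<close>

lemma scalar_root_of_unity:
  assumes fin: "finite (carrier G)"
    and \<alpha>_root: "\<And>x y. x \<in> G\<theta> \<Longrightarrow> y \<in> G\<theta> \<Longrightarrow> root_of_unity (\<alpha> x y)"
    and c: "c \<in> G\<theta>" and Pc: "P c = z \<cdot>\<^sub>m 1\<^sub>m d"
  shows "root_of_unity z"
proof -
  have pow: "c [^]\<^bsub>G\<^esub> j \<in> G\<theta>" for j :: nat
    by (induction j) (auto intro: c subgroup.m_closed[OF stab_subgroup] subgroup.one_closed[OF stab_subgroup])
  have "\<exists>r. root_of_unity r \<and> z ^ j \<cdot>\<^sub>m 1\<^sub>m d = r \<cdot>\<^sub>m P (c [^]\<^bsub>G\<^esub> j)" for j :: nat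
  proof (induction j)
    case 0
    show ?case
      using P_one root_of_unity_one by (auto simp: one_smult_mat)
  next
    case (Suc j)
    then obtain r where r: "root_of_unity r" "z ^ j \<cdot>\<^sub>m 1\<^sub>m d = r \<cdot>\<^sub>m P (c [^]\<^bsub>G\<^esub> j)"
      by blast
    have "P (c [^]\<^bsub>G\<^esub> j) * P c = z \<cdot>\<^sub>m P (c [^]\<^bsub>G\<^esub> j)"
      using Pc mult_smult_distrib[OF P_carrier[OF pow] one_carrier_mat] right_mult_one_mat[OF P_carrier[OF pow]]
    by simp
    then have "z ^ Suc j \<cdot>\<^sub>m 1\<^sub>m d = r \<cdot>\<^sub>m (P (c [^]\<^bsub>G\<^esub> j) * P c)"
      using r(2) by (metis smult_smult_mat mult.commute power_Suc)
    also have "\<dots> = (r * \<alpha> (c [^]\<^bsub>G\<^esub> j) c) \<cdot>\<^sub>m P (c [^]\<^bsub>G\<^esub> Suc j)"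
      using P_mult[OF pow c] by (simp add: smult_smult_mat)
    finally show ?case
      using root_of_unity_mult[OF r(1) \<alpha>_root[OF pow c]] by blast
  qed
  then obtain r where r: "root_of_unity r" "z ^ order G \<cdot>\<^sub>m 1\<^sub>m d = r \<cdot>\<^sub>m 1\<^sub>m d"
    using G.pow_order_eq_1[OF stab_carrier[OF c]] P_one by metis
  have "1\<^sub>m d \<noteq> (0\<^sub>m d d :: complex mat)"
    using d_pos by (metis index_one_mat(1) index_zero_mat(1) zero_neq_one)
  then have "z ^ order G = r"
    using smult_mat_cancel[OF one_carrier_mat _ r(2)] by blast
  moreover have "order G > 0"
    using fin unfolding order_def by (simp add: card_gt_0_iff) blast
  ultimately show ?thesis
    using r(1) root_of_unity_of_power by blast
qed

context
  fixes A B :: "complex mat"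
  assumes A: "A \<in> carrier_mat d d" and B: "B \<in> carrier_mat d d"
    and AB: "A * B = 1\<^sub>m d" and BA: "B * A = 1\<^sub>m d"
begin

lemma sandwich_P_carrier: "y \<in> G\<theta> \<Longrightarrow> B * P y * A \<in> carrier_mat d d"
  using A B P_carrier by auto

lemma sandwich_P_cancel:
  assumes y: "y \<in> G\<theta>" and eq: "k \<cdot>\<^sub>m (B * P y * A) = k' \<cdot>\<^sub>m (B * P y * A)"
  shows "k = k'"
proof (rule smult_mat_cancel[OF sandwich_P_carrier[OF y] _ eq])
  show "B * P y * A \<noteq> 0\<^sub>m d d"
    using unsandwich[OF A B AB P_carrier[OF y]] P_nonzero[OF y] A B by auto
qed

context
  fixes \<sigma> x \<mu>
  assumes \<sigma>: "\<sigma> \<in> galQab" and x: "x \<in> carrier G"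
    and normalizes: "\<And>y. y \<in> G\<theta> \<Longrightarrow> conjg G x y \<in> G\<theta>"
    and eq: "\<And>y. y \<in> G\<theta> \<Longrightarrow> map_mat \<sigma> (P (conjg G x y)) = \<mu> y \<cdot>\<^sub>m (B * P y * A)"
    and \<mu>_K: "\<And>n. n \<in> K \<Longrightarrow> \<mu> n = 1"
begin

lemma sandwich_scalar_nonzero:
  assumes y: "y \<in> G\<theta>"
  shows "\<mu> y \<noteq> 0"
proof
  assume "\<mu> y = 0"
  moreover have "0 \<cdot>\<^sub>m (B * P y * A) = 0\<^sub>m d d"
    using carrier_matD[OF sandwich_P_carrier[OF y]] by (intro eq_matI) auto
  ultimately have "map_mat \<sigma> (P (conjg G x y)) = 0\<^sub>m d d"
    using eq[OF y] by simp
  then show False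
    using map_mat_galQab_nonzero[OF \<sigma> P_Qab_mat P_nonzero] normalizes[OF y] by blast
qed

lemma sandwich_scalar_mult_K:
  assumes y: "y \<in> G\<theta>" and n: "n \<in> K"
  shows "\<mu> (n \<otimes>\<^bsub>G\<^esub> y) = \<mu> y"
proof -
  have nS: "n \<in> G\<theta>" and nyS: "n \<otimes>\<^bsub>G\<^esub> y \<in> G\<theta>"
    using n y K_subset_stab subgroup.m_closed[OF stab_subgroup] by auto
  have xn: "conjg G x n \<in> K"
    using conjg_K[OF x n] .
  have "P (conjg G x (n \<otimes>\<^bsub>G\<^esub> y)) = P (conjg G x n) * P (conjg G x y)"
    using G.conjg_m_mult[OF x K_carrier[OF n] stab_carrier[OF y]] P_mult_K_left[OF xn normalizes[OF y]]
    by simp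
  then have "map_mat \<sigma> (P (conjg G x (n \<otimes>\<^bsub>G\<^esub> y))) = (B * P n * A) * (\<mu> y \<cdot>\<^sub>m (B * P y * A))"
    using map_mat_galQab_mult[OF \<sigma> P_Qab_mat P_Qab_mat] K_subset_stab xn normalizes[OF y]
      eq[OF nS] eq[OF y] \<mu>_K[OF n] by (auto simp: one_smult_mat)
  also have "\<dots> = \<mu> y \<cdot>\<^sub>m (B * P (n \<otimes>\<^bsub>G\<^esub> y) * A)"
    using sandwich_mult[OF A B AB P_carrier[OF nS] P_carrier[OF y]] P_mult_K_left[OF n y]
      mult_smult_distrib[OF sandwich_P_carrier[OF nS] sandwich_P_carrier[OF y]] by simp
  finally show ?thesis
    using eq[OF nyS] sandwich_P_cancel[OF nyS] by metis
qed

lemma is_mu_of_sandwich: "is_mu G K \<theta> d P x \<sigma> \<mu>"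
  unfolding is_mu_def
proof (intro conjI ballI)
  show "\<mu> \<one>\<^bsub>G\<^esub> = 1"
    using \<mu>_K K_normal by (meson normal_imp_subgroup subgroup.one_closed)
  show "\<exists>A B. A \<in> carrier_mat d d \<and> B \<in> carrier_mat d d \<and> A * B = 1\<^sub>m d \<and> B * A = 1\<^sub>m d \<and>
      (\<forall>y\<in>G\<theta>. map_mat \<sigma> (P (conjg G x y)) = \<mu> y \<cdot>\<^sub>m (B * P y * A))"
    using A B AB BA eq by blast
qed (use sandwich_scalar_nonzero sandwich_scalar_mult_K in auto)

end

end

end

section \<open>Lifting a projective representation along a map preserving the action\<close>

locale action_lift = common_normal_subgroup G Gh K for G Gh :: "'a monoid" and K +
  fixes \<tau> :: "'a \<Rightarrow> 'a"
  assumes \<tau>_carrier: "\<And>g. g \<in> carrier Gh \<Longrightarrow> \<tau> g \<in> carrier G"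
    and \<tau>_conjg: "\<And>g k. g \<in> carrier Gh \<Longrightarrow> k \<in> K \<Longrightarrow> conjg G (\<tau> g) k = conjg Gh g k"
    and \<tau>_mult_left: "\<And>g k. k \<in> K \<Longrightarrow> g \<in> carrier Gh \<Longrightarrow> \<tau> (k \<otimes>\<^bsub>Gh\<^esub> g) = k \<otimes>\<^bsub>G\<^esub> \<tau> g"
    and \<tau>_one: "\<tau> \<one>\<^bsub>Gh\<^esub> = \<one>\<^bsub>G\<^esub>"
begin

lemma \<tau>_K: "k \<in> K \<Longrightarrow> \<tau> k = k"
  using \<tau>_mult_left[of k "\<one>\<^bsub>Gh\<^esub>"] \<tau>_one carrier_G carrier_Gh by simp

lemma \<tau>_mult_right:
  assumes k: "k \<in> K" and g: "g \<in> carrier Gh"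
  shows "\<tau> (g \<otimes>\<^bsub>Gh\<^esub> k) = \<tau> g \<otimes>\<^bsub>G\<^esub> k"
proof -
  have "\<tau> (g \<otimes>\<^bsub>Gh\<^esub> k) = conjg Gh g k \<otimes>\<^bsub>G\<^esub> \<tau> g"
    using Gh.mult_conjg_commute[OF g carrier_Gh[OF k]] \<tau>_mult_left conjg_closed_Gh g k by simp
  also have "\<dots> = \<tau> g \<otimes>\<^bsub>G\<^esub> k"
    using G.mult_conjg_commute[OF \<tau>_carrier[OF g] carrier_G[OF k]] \<tau>_conjg[OF g k] by simp
  finally show ?thesis .
qed

lemma \<tau>_stab_iff: "g \<in> carrier Gh \<Longrightarrow> \<tau> g \<in> stab G K \<theta> \<longleftrightarrow> g \<in> stab Gh K \<theta>"
  unfolding stab_def using \<tau>_conjg \<tau>_carrier by auto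

lemma H_triple_lift:
  assumes "H_triple p G K \<theta>"
  shows "H_triple p Gh K \<theta>"
  unfolding H_triple_def
proof (intro conjI ballI)
  show "K \<lhd> Gh"
    by (rule normal_Gh)
  show "irr_char Gh K \<theta>"
    using assms irr_char_cong[of Gh G K] one_eq mult_eq unfolding H_triple_def by simp
  fix g assume g: "g \<in> carrier Gh"
  obtain \<sigma> where "\<sigma> \<in> calH p" "\<forall>n\<in>K. \<theta> (conjg G (\<tau> g) n) = \<sigma> (\<theta> n)"
    using assms \<tau>_carrier[OF g] unfolding H_triple_def by blast
  then show "\<exists>\<sigma>\<in>calH p. \<forall>n\<in>K. \<theta> (conjg Gh g n) = \<sigma> (\<theta> n)"
    using \<tau>_conjg[OF g] by auto
qed

end

text \<open>
  In the applications \<open>Z\<close> is \<open>C_G(N)\<close>, both for \<open>K = N\<close> and for \<open>K = M\<close>; the three conditions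
  modulo \<open>Z\<close> then follow from the fact that elements acting alike on \<open>N\<close> differ by an element of
  \<open>C_G(N)\<close>.
\<close>

locale proj_lift = proj_rep G K \<theta> d P \<alpha> + action_lift G Gh K \<tau>
  for G Gh :: "'a monoid" and K \<theta> d P \<alpha> \<tau> +
  fixes Z :: "'a set" and \<zeta> :: "'a \<Rightarrow> complex"
  assumes \<alpha>_root: "\<And>x y. x \<in> stab G K \<theta> \<Longrightarrow> y \<in> stab G K \<theta> \<Longrightarrow> root_of_unity (\<alpha> x y)"
    and Z_carrier: "Z \<subseteq> carrier G" and one_Z: "\<one>\<^bsub>G\<^esub> \<in> Z"
    and Z_conjg: "\<And>c k. c \<in> Z \<Longrightarrow> k \<in> K \<Longrightarrow> conjg G c k = k"
    and P_Z: "\<And>c. c \<in> Z \<Longrightarrow> P c = \<zeta> c \<cdot>\<^sub>m 1\<^sub>m d"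
    and \<zeta>_root: "\<And>c. c \<in> Z \<Longrightarrow> root_of_unity (\<zeta> c)"
    and \<tau>_mult_mod: "\<And>x y. x \<in> carrier Gh \<Longrightarrow> y \<in> carrier Gh \<Longrightarrow>
      inv\<^bsub>G\<^esub> (\<tau> x \<otimes>\<^bsub>G\<^esub> \<tau> y) \<otimes>\<^bsub>G\<^esub> \<tau> (x \<otimes>\<^bsub>Gh\<^esub> y) \<in> Z"
    and \<tau>_surj_mod: "\<And>y. y \<in> carrier G \<Longrightarrow> \<exists>yh\<in>carrier Gh. inv\<^bsub>G\<^esub> y \<otimes>\<^bsub>G\<^esub> \<tau> yh \<in> Z"
    and \<tau>_conjg_mod: "\<And>x y yh. x \<in> carrier Gh \<Longrightarrow> y \<in> carrier G \<Longrightarrow> yh \<in> carrier Gh \<Longrightarrow>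
      inv\<^bsub>G\<^esub> y \<otimes>\<^bsub>G\<^esub> \<tau> yh \<in> Z \<Longrightarrow> inv\<^bsub>G\<^esub> (conjg G (\<tau> x) y) \<otimes>\<^bsub>G\<^esub> \<tau> (conjg Gh x yh) \<in> Z"
begin

abbreviation "Gh\<theta> \<equiv> stab Gh K \<theta>"

lemma Z_subset_stab: "Z \<subseteq> G\<theta>"
  unfolding stab_def using Z_conjg Z_carrier by auto

definition rescale :: "'a \<Rightarrow> 'a \<Rightarrow> complex" where
  "rescale a b = \<zeta> (inv\<^bsub>G\<^esub> a \<otimes>\<^bsub>G\<^esub> b) / \<alpha> a (inv\<^bsub>G\<^esub> a \<otimes>\<^bsub>G\<^esub> b)"

lemma P_rescale:
  assumes a: "a \<in> G\<theta>" and b: "b \<in> carrier G" and ab: "inv\<^bsub>G\<^esub> a \<otimes>\<^bsub>G\<^esub> b \<in> Z"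
  shows "P b = rescale a b \<cdot>\<^sub>m P a"
proof -
  define c where "c = inv\<^bsub>G\<^esub> a \<otimes>\<^bsub>G\<^esub> b"
  have c: "c \<in> Z" "c \<in> G\<theta>"
    using ab Z_subset_stab unfolding c_def by auto
  have "a \<otimes>\<^bsub>G\<^esub> c = b"
    unfolding c_def using stab_carrier[OF a] b by (simp add: G.m_assoc[symmetric])
  then have "\<alpha> a c \<cdot>\<^sub>m P b = \<zeta> c \<cdot>\<^sub>m P a"
    using P_mult[OF a c(2)] P_Z[OF c(1)] mult_smult_distrib[OF P_carrier[OF a] one_carrier_mat]
      right_mult_one_mat[OF P_carrier[OF a]] by simp
  then have "(1 / \<alpha> a c) \<cdot>\<^sub>m (\<alpha> a c \<cdot>\<^sub>m P b) = (\<zeta> c / \<alpha> a c) \<cdot>\<^sub>m P a"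
    by (simp add: smult_smult_mat)
  then show ?thesis
    using \<alpha>_nonzero[OF a c(2)] unfolding rescale_def c_def[symmetric]
    by (simp add: smult_smult_mat one_smult_mat)
qed

lemma rescale_root: "a \<in> G\<theta> \<Longrightarrow> inv\<^bsub>G\<^esub> a \<otimes>\<^bsub>G\<^esub> b \<in> Z \<Longrightarrow> root_of_unity (rescale a b)"
  unfolding rescale_def using \<zeta>_root \<alpha>_root Z_subset_stab by (blast intro: root_of_unity_divide)

lemma rescale_self:
  assumes a: "a \<in> G\<theta>"
  shows "rescale a a = 1"
proof -
  have "rescale a a \<cdot>\<^sub>m P a = 1 \<cdot>\<^sub>m P a"
    using P_rescale[OF a stab_carrier[OF a]] stab_carrier[OF a] one_Z by (simp add: one_smult_mat)
  then show ?thesis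
    using smult_mat_cancel[OF P_carrier[OF a] P_nonzero[OF a]] by blast
qed

definition \<alpha>_lift :: "'a \<Rightarrow> 'a \<Rightarrow> complex" where
  "\<alpha>_lift x y = \<alpha> (\<tau> x) (\<tau> y) / rescale (\<tau> x \<otimes>\<^bsub>G\<^esub> \<tau> y) (\<tau> (x \<otimes>\<^bsub>Gh\<^esub> y))"

lemma P_lift_mult:
  assumes x: "x \<in> Gh\<theta>" and y: "y \<in> Gh\<theta>"
  shows "P (\<tau> x) * P (\<tau> y) = \<alpha>_lift x y \<cdot>\<^sub>m P (\<tau> (x \<otimes>\<^bsub>Gh\<^esub> y))"
proof -
  have xy: "x \<in> carrier Gh" "y \<in> carrier Gh"
    using x y by (auto simp: stab_def)
  have a: "\<tau> x \<in> G\<theta>" and b: "\<tau> y \<in> G\<theta>"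
    using \<tau>_stab_iff x y xy by auto
  have ab: "\<tau> x \<otimes>\<^bsub>G\<^esub> \<tau> y \<in> G\<theta>"
    using subgroup.m_closed[OF stab_subgroup a b] .
  define r where "r = rescale (\<tau> x \<otimes>\<^bsub>G\<^esub> \<tau> y) (\<tau> (x \<otimes>\<^bsub>Gh\<^esub> y))"
  have "r \<noteq> 0"
    using rescale_root[OF ab \<tau>_mult_mod[OF xy]] root_of_unity_nonzero unfolding r_def by blast
  moreover have "P (\<tau> (x \<otimes>\<^bsub>Gh\<^esub> y)) = r \<cdot>\<^sub>m P (\<tau> x \<otimes>\<^bsub>G\<^esub> \<tau> y)"
    using P_rescale[OF ab \<tau>_carrier \<tau>_mult_mod[OF xy]] xy unfolding r_def by simp
  ultimately have "P (\<tau> x \<otimes>\<^bsub>G\<^esub> \<tau> y) = (1 / r) \<cdot>\<^sub>m P (\<tau> (x \<otimes>\<^bsub>Gh\<^esub> y))"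
    by (simp add: smult_smult_mat one_smult_mat)
  then show ?thesis
    using P_mult[OF a b] unfolding \<alpha>_lift_def r_def[symmetric] by (simp add: smult_smult_mat)
qed

lemma \<alpha>_lift_root:
  assumes x: "x \<in> Gh\<theta>" and y: "y \<in> Gh\<theta>"
  shows "root_of_unity (\<alpha>_lift x y)"
proof -
  have xy: "x \<in> carrier Gh" "y \<in> carrier Gh"
    using x y by (auto simp: stab_def)
  have a: "\<tau> x \<in> G\<theta>" and b: "\<tau> y \<in> G\<theta>"
    using \<tau>_stab_iff x y xy by auto
  show ?thesis
    unfolding \<alpha>_lift_def using \<alpha>_root[OF a b] rescale_root[OF _ \<tau>_mult_mod[OF xy]]
      subgroup.m_closed[OF stab_subgroup a b] by (blast intro: root_of_unity_divide)
qed

lemma lift_assoc_proj: "assoc_proj Gh K \<theta> d (\<lambda>g. P (\<tau> g)) \<alpha>_lift"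
  unfolding assoc_proj_def
proof (intro conjI ballI)
  fix x assume "x \<in> Gh\<theta>"
  then have "\<tau> x \<in> G\<theta>"
    using \<tau>_stab_iff by (auto simp: stab_def)
  then show "P (\<tau> x) \<in> carrier_mat d d" "invertible_mat (P (\<tau> x))"
    "\<forall>i<d. \<forall>j<d. P (\<tau> x) $$ (i, j) \<in> Qab"
    using P_carrier P_invertible P_Qab_mat unfolding Qab_mat_def by blast+
next
  fix x y assume "x \<in> Gh\<theta>" "y \<in> Gh\<theta>"
  then show "\<alpha>_lift x y \<noteq> 0" "P (\<tau> x) * P (\<tau> y) = \<alpha>_lift x y \<cdot>\<^sub>m P (\<tau> (x \<otimes>\<^bsub>Gh\<^esub> y))"
    using P_lift_mult \<alpha>_lift_root root_of_unity_nonzero by blast+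
next
  have "P (\<tau> (x \<otimes>\<^bsub>Gh\<^esub> y)) = P (\<tau> x) * P (\<tau> y)" if "x \<in> K" "y \<in> K" for x y
    using that \<tau>_K mult_eq P_mult_K_left K_subset_stab subgroup.m_closed[OF subgroup_G] by auto
  then show "is_rep Gh K d (\<lambda>g. P (\<tau> g))"
    unfolding is_rep_def using \<tau>_K \<tau>_one P_one P_carrier K_subset_stab by auto
next
  fix n assume "n \<in> K"
  then show "mat_trace (P (\<tau> n)) = \<theta> n"
    using \<tau>_K mat_trace_P by simp
next
  fix n g assume n: "n \<in> K" and g: "g \<in> Gh\<theta>"
  have gc: "g \<in> carrier Gh" and tg: "\<tau> g \<in> G\<theta>"
    using g \<tau>_stab_iff by (auto simp: stab_def)
  show "P (\<tau> (n \<otimes>\<^bsub>Gh\<^esub> g)) = P (\<tau> n) * P (\<tau> g)" "P (\<tau> (g \<otimes>\<^bsub>Gh\<^esub> n)) = P (\<tau> g) * P (\<tau> n)"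
    using \<tau>_mult_left[OF n gc] \<tau>_mult_right[OF n gc] P_mult_K_left[OF n tg] P_mult_K_right[OF n tg]
      \<tau>_K[OF n] by simp_all
qed

end

context proj_lift
begin

context
  fixes x \<sigma> \<mu>h and A B :: "complex mat"
  assumes x: "x \<in> carrier Gh" and \<sigma>: "\<sigma> \<in> galQab"
    and stable: "\<And>k. k \<in> K \<Longrightarrow> \<sigma> (\<theta> (conjg G (\<tau> x) k)) = \<theta> k"
    and A: "A \<in> carrier_mat d d" and B: "B \<in> carrier_mat d d"
    and AB: "A * B = 1\<^sub>m d" and BA: "B * A = 1\<^sub>m d"
    and \<mu>h: "\<And>yh. yh \<in> Gh\<theta> \<Longrightarrow> map_mat \<sigma> (P (\<tau> (conjg Gh x yh))) = \<mu>h yh \<cdot>\<^sub>m (B * P (\<tau> yh) * A)"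
begin

lemma conjg_\<tau>_stab: "y \<in> G\<theta> \<Longrightarrow> conjg G (\<tau> x) y \<in> G\<theta>"
  using conjg_stab[OF \<sigma> \<tau>_carrier[OF x] stable] .

lemma P_lift_conjg:
  assumes y: "y \<in> G\<theta>" and yh: "yh \<in> carrier Gh" and y_yh: "inv\<^bsub>G\<^esub> y \<otimes>\<^bsub>G\<^esub> \<tau> yh \<in> Z"
  shows "\<sigma> (rescale (conjg G (\<tau> x) y) (\<tau> (conjg Gh x yh))) \<cdot>\<^sub>m map_mat \<sigma> (P (conjg G (\<tau> x) y))
    = (\<mu>h yh * rescale y (\<tau> yh)) \<cdot>\<^sub>m (B * P y * A)"
proof -
  define v w where "v = conjg G (\<tau> x) y" and "w = \<tau> (conjg Gh x yh)"
  have v: "v \<in> G\<theta>"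
    unfolding v_def using conjg_\<tau>_stab[OF y] .
  have w: "w \<in> carrier G"
    unfolding w_def using \<tau>_carrier x yh by simp
  have vw: "inv\<^bsub>G\<^esub> v \<otimes>\<^bsub>G\<^esub> w \<in> Z"
    unfolding v_def w_def using \<tau>_conjg_mod[OF x stab_carrier[OF y] yh y_yh] .
  have "y \<otimes>\<^bsub>G\<^esub> (inv\<^bsub>G\<^esub> y \<otimes>\<^bsub>G\<^esub> \<tau> yh) = \<tau> yh"
    using stab_carrier[OF y] \<tau>_carrier[OF yh] by (simp add: G.m_assoc[symmetric])
  moreover have "y \<otimes>\<^bsub>G\<^esub> (inv\<^bsub>G\<^esub> y \<otimes>\<^bsub>G\<^esub> \<tau> yh) \<in> G\<theta>"
    using subgroup.m_closed[OF stab_subgroup y] Z_subset_stab y_yh by blast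
  ultimately have "\<tau> yh \<in> G\<theta>"
    by simp
  then have yhS: "yh \<in> Gh\<theta>"
    using \<tau>_stab_iff yh by blast
  have "map_mat \<sigma> (P w) = \<sigma> (rescale v w) \<cdot>\<^sub>m map_mat \<sigma> (P v)"
    using P_rescale[OF v w vw] map_mat_galQab_smult[OF \<sigma> _ P_Qab_mat[OF v]]
      root_of_unity_in_Qab[OF rescale_root[OF v vw]] by simp
  moreover have "map_mat \<sigma> (P w) = (\<mu>h yh * rescale y (\<tau> yh)) \<cdot>\<^sub>m (B * P y * A)"
    using \<mu>h[OF yhS] P_rescale[OF y \<tau>_carrier[OF yh] y_yh] sandwich_smult[OF A B P_carrier[OF y]]
    unfolding w_def by (simp add: smult_smult_mat)
  ultimately show ?thesis
    unfolding v_def w_def by simp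
qed

lemma P_conjg_sandwich_exists:
  assumes y: "y \<in> G\<theta>"
  shows "\<exists>k. map_mat \<sigma> (P (conjg G (\<tau> x) y)) = k \<cdot>\<^sub>m (B * P y * A)"
proof -
  obtain yh where yh: "yh \<in> carrier Gh" and y_yh: "inv\<^bsub>G\<^esub> y \<otimes>\<^bsub>G\<^esub> \<tau> yh \<in> Z"
    using \<tau>_surj_mod[OF stab_carrier[OF y]] by blast
  define r where "r = \<sigma> (rescale (conjg G (\<tau> x) y) (\<tau> (conjg Gh x yh)))"
  have "r \<noteq> 0"
    unfolding r_def using rescale_root[OF conjg_\<tau>_stab[OF y] \<tau>_conjg_mod[OF x stab_carrier[OF y] yh y_yh]]
    by (simp add: galQab_nonzero[OF \<sigma>] root_of_unity_in_Qab root_of_unity_nonzero)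
  from smult_mat_solve[OF this P_lift_conjg[OF y yh y_yh, folded r_def]]
  show ?thesis
    by (auto simp: smult_smult_mat)
qed

lemma lift_sandwich_scalar:
  assumes \<mu>: "\<And>y. y \<in> G\<theta> \<Longrightarrow> map_mat \<sigma> (P (conjg G (\<tau> x) y)) = \<mu> y \<cdot>\<^sub>m (B * P y * A)"
    and yh: "yh \<in> Gh\<theta>"
  shows "\<mu>h yh = \<sigma> (rescale (conjg G (\<tau> x) (\<tau> yh)) (\<tau> (conjg Gh x yh))) * \<mu> (\<tau> yh)"
proof -
  have yhc: "yh \<in> carrier Gh" and y: "\<tau> yh \<in> G\<theta>"
    using yh \<tau>_stab_iff by (auto simp: stab_def)
  have "inv\<^bsub>G\<^esub> (\<tau> yh) \<otimes>\<^bsub>G\<^esub> \<tau> yh \<in> Z"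
    using one_Z stab_carrier[OF y] by simp
  from P_lift_conjg[OF y yhc this]
  have "(\<sigma> (rescale (conjg G (\<tau> x) (\<tau> yh)) (\<tau> (conjg Gh x yh))) * \<mu> (\<tau> yh)) \<cdot>\<^sub>m (B * P (\<tau> yh) * A)
      = \<mu>h yh \<cdot>\<^sub>m (B * P (\<tau> yh) * A)"
    using \<mu>[OF y] rescale_self[OF y] by (simp add: smult_smult_mat)
  then show ?thesis
    using sandwich_P_cancel[OF A B AB BA y] by metis
qed

end

text \<open>
  \<open>is_mu\<close> only characterizes \<open>\<mu>\<close>, so the function for \<open>P\<close> has to be constructed, here from the one
  for the lift.
\<close>

lemma mu_lift:
  assumes x: "x \<in> carrier Gh" and \<sigma>: "\<sigma> \<in> galQab"
    and stable: "\<And>k. k \<in> K \<Longrightarrow> \<sigma> (\<theta> (conjg G (\<tau> x) k)) = \<theta> k"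
    and \<mu>h: "is_mu Gh K \<theta> d (\<lambda>g. P (\<tau> g)) x \<sigma> \<mu>h"
  obtains \<mu> where "is_mu G K \<theta> d P (\<tau> x) \<sigma> \<mu>"
    and "\<And>yh. yh \<in> Gh\<theta> \<Longrightarrow>
      \<mu>h yh = \<sigma> (rescale (conjg G (\<tau> x) (\<tau> yh)) (\<tau> (conjg Gh x yh))) * \<mu> (\<tau> yh)"
proof -
  obtain A B where A: "A \<in> carrier_mat d d" and B: "B \<in> carrier_mat d d"
    and AB: "A * B = 1\<^sub>m d" and BA: "B * A = 1\<^sub>m d"
    and \<mu>h_eq: "\<And>yh. yh \<in> Gh\<theta> \<Longrightarrow> map_mat \<sigma> (P (\<tau> (conjg Gh x yh))) = \<mu>h yh \<cdot>\<^sub>m (B * P (\<tau> yh) * A)"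
    using \<mu>h unfolding is_mu_def by blast
  note lift = x \<sigma> stable A B AB BA \<mu>h_eq
  have \<mu>h_K: "\<mu>h n = 1" if n: "n \<in> K" for n
  proof -
    have "\<one>\<^bsub>Gh\<^esub> \<in> Gh\<theta>"
      using \<tau>_stab_iff[OF Gh.one_closed] \<tau>_one subgroup.one_closed[OF stab_subgroup] by simp
    moreover have "\<mu>h \<one>\<^bsub>Gh\<^esub> = 1" "\<forall>y\<in>Gh\<theta>. \<forall>n\<in>K. \<mu>h (n \<otimes>\<^bsub>Gh\<^esub> y) = \<mu>h y"
      using \<mu>h unfolding is_mu_def by blast+
    ultimately show ?thesis
      using n carrier_Gh by force
  qed
  obtain \<mu> where \<mu>: "\<And>y. y \<in> G\<theta> \<Longrightarrow> map_mat \<sigma> (P (conjg G (\<tau> x) y)) = \<mu> y \<cdot>\<^sub>m (B * P y * A)"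
    using P_conjg_sandwich_exists[OF lift] by metis
  have \<mu>_K: "\<mu> n = 1" if n: "n \<in> K" for n
  proof -
    have "map_mat \<sigma> (P (conjg G (\<tau> x) n)) = B * P n * A"
      using \<mu>h_eq[of n] \<mu>h_K[OF n] \<tau>_conjg[OF x n] \<tau>_K[OF n] \<tau>_K[OF conjg_closed_Gh[OF x n]]
        \<tau>_stab_iff[OF carrier_Gh[OF n]] K_subset_stab n by (auto simp: one_smult_mat)
    then show ?thesis
      using \<mu>[of n] sandwich_P_cancel[OF A B AB BA, of n "\<mu> n" 1] K_subset_stab n
      by (auto simp: one_smult_mat)
  qed
  show ?thesis
    using that is_mu_of_sandwich[OF A B AB BA \<sigma> \<tau>_carrier[OF x] conjg_\<tau>_stab[OF lift] \<mu> \<mu>_K]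
      lift_sandwich_scalar[OF lift \<mu>] by blast
qed

end


section \<open>Transporting a subgroup with the same action\<close>

lemma conj_image_eqD:
  assumes "conj_image A N X = conj_image B N Y" "x \<in> X"
  shows "\<exists>y\<in>Y. \<forall>n\<in>N. conjg B y n = conjg A x n"
proof -
  have "restrict (conjg A x) N \<in> conj_image B N Y"
    using assms unfolding conj_image_def by (metis image_eqI)
  then obtain y where "y \<in> Y" "restrict (conjg A x) N = restrict (conjg B y) N"
    unfolding conj_image_def by auto
  then show ?thesis
    by (metis restrict_apply')
qed

locale lift_setting = common_normal_subgroup G Gh N for G Gh :: "'a monoid" and N +
  fixes M H Hh :: "'a set"
  assumes same_actions: "conj_image Gh N (carrier Gh) = conj_image G N (carrier G)"
    and H_subgroup: "subgroup H G" and N_H_product: "N <#>\<^bsub>G\<^esub> H = carrier G"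
    and N_inter_H: "N \<inter> H = M" and centralizer_subset_H: "centralizer_in G N \<subseteq> H"
    and Hh_subgroup: "subgroup Hh Gh"
    and M_centralizer_subset_Hh: "M <#>\<^bsub>Gh\<^esub> centralizer_in Gh N \<subseteq> Hh"
    and same_actions_H: "conj_image Gh N Hh = conj_image G N H"
begin

abbreviation "C \<equiv> centralizer_in G N"
abbreviation "GH \<equiv> G\<lparr>carrier := H\<rparr>"
abbreviation "GHh \<equiv> Gh\<lparr>carrier := Hh\<rparr>"

lemma N_subset_G: "N \<subseteq> carrier G"
  using carrier_G by blast

lemma N_subset_Gh: "N \<subseteq> carrier Gh"
  using carrier_Gh by blast

lemma H_carrier: "h \<in> H \<Longrightarrow> h \<in> carrier G"
  using subgroup.mem_carrier[OF H_subgroup] .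

lemma Hh_carrier: "h \<in> Hh \<Longrightarrow> h \<in> carrier Gh"
  using subgroup.mem_carrier[OF Hh_subgroup] .

lemma same_action_imp_C:
  "a \<in> carrier G \<Longrightarrow> b \<in> carrier G \<Longrightarrow> (\<And>n. n \<in> N \<Longrightarrow> conjg G a n = conjg G b n) \<Longrightarrow> inv\<^bsub>G\<^esub> a \<otimes>\<^bsub>G\<^esub> b \<in> C"
  using G.same_action_imp_centralizer_in[OF _ _ N_subset_G] by blast

lemma M_subset_Hh: "M \<subseteq> Hh"
proof
  fix m assume m: "m \<in> M"
  then have "m \<otimes>\<^bsub>Gh\<^esub> \<one>\<^bsub>Gh\<^esub> \<in> M <#>\<^bsub>Gh\<^esub> centralizer_in Gh N"
    using Gh.one_in_centralizer_in[OF N_subset_Gh] unfolding set_mult_def by blast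
  then show "m \<in> Hh"
    using M_centralizer_subset_Hh m N_inter_H carrier_Gh by auto
qed

lemma centralizer_Gh_subset_Hh: "centralizer_in Gh N \<subseteq> Hh"
proof
  fix c assume c: "c \<in> centralizer_in Gh N"
  have "\<one>\<^bsub>Gh\<^esub> \<in> M"
    using one_eq subgroup.one_closed[OF H_subgroup] subgroup.one_closed[OF subgroup_G] N_inter_H
    by auto
  then have "\<one>\<^bsub>Gh\<^esub> \<otimes>\<^bsub>Gh\<^esub> c \<in> M <#>\<^bsub>Gh\<^esub> centralizer_in Gh N"
    using c unfolding set_mult_def by blast
  then show "c \<in> Hh"
    using M_centralizer_subset_Hh c by (auto simp: centralizer_in_def)
qed

lemma N_inter_Hh: "N \<inter> Hh = M"
proof
  show "M \<subseteq> N \<inter> Hh"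
    using M_subset_Hh N_inter_H by blast
next
  show "N \<inter> Hh \<subseteq> M"
  proof
    fix n assume n: "n \<in> N \<inter> Hh"
    obtain h where h: "h \<in> H" and "\<forall>k\<in>N. conjg G h k = conjg Gh n k"
      using conj_image_eqD[OF same_actions_H] n by blast
    then have "inv\<^bsub>G\<^esub> n \<otimes>\<^bsub>G\<^esub> h \<in> H"
      using same_action_imp_C[of n h] carrier_G H_carrier conjg_eq n centralizer_subset_H by auto
    moreover have "n = h \<otimes>\<^bsub>G\<^esub> inv\<^bsub>G\<^esub> (inv\<^bsub>G\<^esub> n \<otimes>\<^bsub>G\<^esub> h)"
      using carrier_G H_carrier h n by (simp add: G.inv_mult_group G.m_assoc[symmetric])
    ultimately have "n \<in> H"
      using subgroup.m_closed[OF H_subgroup h subgroup.m_inv_closed[OF H_subgroup]] by metis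
    then show "n \<in> M"
      using n N_inter_H by blast
  qed
qed

lemma N_Hh_product: "N <#>\<^bsub>Gh\<^esub> Hh = carrier Gh"
proof
  show "N <#>\<^bsub>Gh\<^esub> Hh \<subseteq> carrier Gh"
    unfolding set_mult_def using carrier_Gh Hh_carrier by auto
next
  show "carrier Gh \<subseteq> N <#>\<^bsub>Gh\<^esub> Hh"
  proof
    fix g assume g: "g \<in> carrier Gh"
    obtain g' where g': "g' \<in> carrier G" and g'_act: "\<forall>k\<in>N. conjg G g' k = conjg Gh g k"
      using conj_image_eqD[OF same_actions g] by blast
    obtain n h where n: "n \<in> N" and h: "h \<in> H" and g'_eq: "g' = n \<otimes>\<^bsub>G\<^esub> h"
      using g' N_H_product unfolding set_mult_def by blast
    obtain hh where hh: "hh \<in> Hh" and hh_act: "\<forall>k\<in>N. conjg Gh hh k = conjg G h k"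
      using conj_image_eqD[OF same_actions_H[symmetric] h] by blast
    have "conjg Gh (n \<otimes>\<^bsub>Gh\<^esub> hh) k = conjg Gh g k" if k: "k \<in> N" for k
    proof -
      have "conjg Gh (n \<otimes>\<^bsub>Gh\<^esub> hh) k = conjg G n (conjg G h k)"
        using Gh.conjg_mult carrier_Gh[OF n] Hh_carrier[OF hh] carrier_Gh[OF k] hh_act k
          conjg_eq n conjg_closed_G[OF H_carrier[OF h] k] by simp
      also have "\<dots> = conjg G g' k"
        using g'_eq G.conjg_mult carrier_G n H_carrier[OF h] k by simp
      finally show ?thesis
        using g'_act k by simp
    qed
    then have "inv\<^bsub>Gh\<^esub> (n \<otimes>\<^bsub>Gh\<^esub> hh) \<otimes>\<^bsub>Gh\<^esub> g \<in> Hh"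
      using Gh.same_action_imp_centralizer_in[OF _ g N_subset_Gh] carrier_Gh[OF n] Hh_carrier[OF hh]
        centralizer_Gh_subset_Hh by auto
    then have "hh \<otimes>\<^bsub>Gh\<^esub> (inv\<^bsub>Gh\<^esub> (n \<otimes>\<^bsub>Gh\<^esub> hh) \<otimes>\<^bsub>Gh\<^esub> g) \<in> Hh"
      using subgroup.m_closed[OF Hh_subgroup hh] by blast
    moreover have "g = n \<otimes>\<^bsub>Gh\<^esub> (hh \<otimes>\<^bsub>Gh\<^esub> (inv\<^bsub>Gh\<^esub> (n \<otimes>\<^bsub>Gh\<^esub> hh) \<otimes>\<^bsub>Gh\<^esub> g))"
      using carrier_Gh[OF n] Hh_carrier[OF hh] g by (simp add: Gh.m_assoc[symmetric])
    ultimately show "g \<in> N <#>\<^bsub>Gh\<^esub> Hh"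
      using n unfolding set_mult_def by blast
  qed
qed

lemma M_normal_GH: "M \<lhd> GH"
  using G.normal_Int_subgroup[OF H_subgroup normal_G] N_inter_H by simp

lemma M_normal_GHh: "M \<lhd> GHh"
  using Gh.normal_Int_subgroup[OF Hh_subgroup normal_Gh] N_inter_Hh by simp

lemma mult_left_mem_N: "k \<in> N \<Longrightarrow> x \<in> carrier Gh \<Longrightarrow> k \<otimes>\<^bsub>Gh\<^esub> x \<in> N \<longleftrightarrow> x \<in> N"
  by (metis Gh.inv_solve_left' carrier_Gh subgroup.m_closed subgroup.m_inv_closed subgroup_Gh)

text \<open>
  \<open>\<tau> g\<close> replaces the \<open>Hh\<close>-part of \<open>g\<close> by an element of \<open>H\<close> with the same action on \<open>N\<close>. The
  \<open>Hh\<close>-part is chosen by a predicate depending only on the coset \<open>N g\<close>, which makes \<open>\<tau>\<close> commute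
  with left multiplication by \<open>N\<close>.
\<close>

definition transversal :: "'a \<Rightarrow> 'a" where
  "transversal g = (if g \<in> N then \<one>\<^bsub>Gh\<^esub> else (SOME h. h \<in> Hh \<and> g \<otimes>\<^bsub>Gh\<^esub> inv\<^bsub>Gh\<^esub> h \<in> N))"

definition matching :: "'a \<Rightarrow> 'a" where
  "matching h = (if h = \<one>\<^bsub>Gh\<^esub> then \<one>\<^bsub>G\<^esub> else (SOME h'. h' \<in> H \<and> (\<forall>n\<in>N. conjg G h' n = conjg Gh h n)))"

definition \<tau> :: "'a \<Rightarrow> 'a" where
  "\<tau> g = (g \<otimes>\<^bsub>Gh\<^esub> inv\<^bsub>Gh\<^esub> (transversal g)) \<otimes>\<^bsub>G\<^esub> matching (transversal g)"

lemma transversal: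
  assumes g: "g \<in> carrier Gh"
  shows "transversal g \<in> Hh" "g \<otimes>\<^bsub>Gh\<^esub> inv\<^bsub>Gh\<^esub> (transversal g) \<in> N"
proof -
  obtain n h where n: "n \<in> N" and h: "h \<in> Hh" and "g = n \<otimes>\<^bsub>Gh\<^esub> h"
    using g N_Hh_product unfolding set_mult_def by blast
  then have "g \<otimes>\<^bsub>Gh\<^esub> inv\<^bsub>Gh\<^esub> h = n"
    using carrier_Gh[OF n] Hh_carrier[OF h] by (simp add: Gh.m_assoc)
  then have "\<exists>h. h \<in> Hh \<and> g \<otimes>\<^bsub>Gh\<^esub> inv\<^bsub>Gh\<^esub> h \<in> N"
    using h n by blast
  from someI_ex[OF this]
  show "transversal g \<in> Hh" "g \<otimes>\<^bsub>Gh\<^esub> inv\<^bsub>Gh\<^esub> (transversal g) \<in> N"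
    unfolding transversal_def using subgroup.one_closed[OF Hh_subgroup] g by auto
qed

lemma transversal_mult_left:
  assumes k: "k \<in> N" and g: "g \<in> carrier Gh"
  shows "transversal (k \<otimes>\<^bsub>Gh\<^esub> g) = transversal g"
proof -
  have "(k \<otimes>\<^bsub>Gh\<^esub> g) \<otimes>\<^bsub>Gh\<^esub> inv\<^bsub>Gh\<^esub> h \<in> N \<longleftrightarrow> g \<otimes>\<^bsub>Gh\<^esub> inv\<^bsub>Gh\<^esub> h \<in> N" if "h \<in> Hh" for h
    using mult_left_mem_N[OF k] carrier_Gh[OF k] g Hh_carrier[OF that] by (simp add: Gh.m_assoc)
  then have "(\<lambda>h. h \<in> Hh \<and> (k \<otimes>\<^bsub>Gh\<^esub> g) \<otimes>\<^bsub>Gh\<^esub> inv\<^bsub>Gh\<^esub> h \<in> N) = (\<lambda>h. h \<in> Hh \<and> g \<otimes>\<^bsub>Gh\<^esub> inv\<^bsub>Gh\<^esub> h \<in> N)"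
    by blast
  then show ?thesis
    unfolding transversal_def using mult_left_mem_N[OF k g] by simp
qed

lemma matching:
  assumes h: "h \<in> Hh"
  shows "matching h \<in> H" "\<And>n. n \<in> N \<Longrightarrow> conjg G (matching h) n = conjg Gh h n"
proof -
  have "\<exists>h'. h' \<in> H \<and> (\<forall>n\<in>N. conjg G h' n = conjg Gh h n)"
    using conj_image_eqD[OF same_actions_H h] by blast
  from someI_ex[OF this]
  show "matching h \<in> H" "\<And>n. n \<in> N \<Longrightarrow> conjg G (matching h) n = conjg Gh h n"
    unfolding matching_def using subgroup.one_closed[OF H_subgroup] carrier_G carrier_Gh by auto
qed

lemma \<tau>_carrier: "g \<in> carrier Gh \<Longrightarrow> \<tau> g \<in> carrier G"
  unfolding \<tau>_def using transversal matching carrier_G H_carrier by blast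

lemma \<tau>_H:
  assumes g: "g \<in> Hh"
  shows "\<tau> g \<in> H"
proof -
  have "g \<otimes>\<^bsub>Gh\<^esub> inv\<^bsub>Gh\<^esub> (transversal g) \<in> Hh"
    using transversal Hh_carrier[OF g] subgroup.m_closed[OF Hh_subgroup g]
      subgroup.m_inv_closed[OF Hh_subgroup] by blast
  then have "g \<otimes>\<^bsub>Gh\<^esub> inv\<^bsub>Gh\<^esub> (transversal g) \<in> H"
    using transversal Hh_carrier[OF g] N_inter_Hh N_inter_H by blast
  then show ?thesis
    unfolding \<tau>_def using subgroup.m_closed[OF H_subgroup] matching transversal Hh_carrier[OF g] by blast
qed

lemma \<tau>_conjg:
  assumes g: "g \<in> carrier Gh" and k: "k \<in> N"
  shows "conjg G (\<tau> g) k = conjg Gh g k"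
proof -
  define r m where "r = transversal g" and "m = g \<otimes>\<^bsub>Gh\<^esub> inv\<^bsub>Gh\<^esub> r"
  have r: "r \<in> Hh" and m: "m \<in> N"
    using transversal[OF g] unfolding r_def m_def by auto
  have rc: "r \<in> carrier Gh"
    using Hh_carrier[OF r] .
  have "conjg G (\<tau> g) k = conjg G m (conjg G (matching r) k)"
    unfolding \<tau>_def r_def[symmetric] m_def[symmetric]
    using G.conjg_mult carrier_G[OF m] H_carrier[OF matching(1)[OF r]] carrier_G[OF k] by blast
  also have "\<dots> = conjg Gh m (conjg Gh r k)"
    using matching(2)[OF r k] conjg_eq[OF m] conjg_closed_Gh[OF rc k] by simp
  also have "\<dots> = conjg Gh (m \<otimes>\<^bsub>Gh\<^esub> r) k"
    using Gh.conjg_mult carrier_Gh[OF m] rc carrier_Gh[OF k] by simp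
  also have "m \<otimes>\<^bsub>Gh\<^esub> r = g"
    unfolding m_def using g rc by (simp add: Gh.m_assoc)
  finally show ?thesis .
qed

lemma \<tau>_mult_left:
  assumes k: "k \<in> N" and g: "g \<in> carrier Gh"
  shows "\<tau> (k \<otimes>\<^bsub>Gh\<^esub> g) = k \<otimes>\<^bsub>G\<^esub> \<tau> g"
proof -
  define r where "r = transversal g"
  have r: "r \<in> Hh" and m: "g \<otimes>\<^bsub>Gh\<^esub> inv\<^bsub>Gh\<^esub> r \<in> N"
    using transversal[OF g] unfolding r_def by auto
  have "(k \<otimes>\<^bsub>Gh\<^esub> g) \<otimes>\<^bsub>Gh\<^esub> inv\<^bsub>Gh\<^esub> r = k \<otimes>\<^bsub>G\<^esub> (g \<otimes>\<^bsub>Gh\<^esub> inv\<^bsub>Gh\<^esub> r)"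
    using carrier_Gh[OF k] g Hh_carrier[OF r] mult_eq[OF k m] by (simp add: Gh.m_assoc)
  then show ?thesis
    unfolding \<tau>_def transversal_mult_left[OF k g] r_def[symmetric]
    using G.m_assoc carrier_G[OF k] carrier_G[OF m] H_carrier[OF matching(1)[OF r]] by simp
qed

lemma \<tau>_one: "\<tau> \<one>\<^bsub>Gh\<^esub> = \<one>\<^bsub>G\<^esub>"
proof -
  have "\<one>\<^bsub>Gh\<^esub> \<in> N"
    using one_eq subgroup.one_closed[OF subgroup_G] by simp
  then have "\<tau> \<one>\<^bsub>Gh\<^esub> = \<one>\<^bsub>Gh\<^esub> \<otimes>\<^bsub>G\<^esub> \<one>\<^bsub>G\<^esub>"
    unfolding \<tau>_def transversal_def matching_def by simp
  then show ?thesis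
    using one_eq by simp
qed

lemma C_same_action:
  assumes c: "c \<in> C" and a: "a \<in> carrier G" and n: "n \<in> N"
  shows "conjg G (a \<otimes>\<^bsub>G\<^esub> c) n = conjg G a n"
proof -
  have "c \<in> carrier G"
    using c by (simp add: centralizer_in_def)
  then show ?thesis
    using G.conjg_mult[OF a _ carrier_G[OF n]] G.centralizer_in_conjg[OF N_subset_G c n] by simp
qed

lemma \<tau>_same_action_C:
  assumes y: "y \<in> carrier G" and yh: "yh \<in> carrier Gh"
    and same: "\<And>n. n \<in> N \<Longrightarrow> conjg Gh yh n = conjg G y n"
  shows "inv\<^bsub>G\<^esub> y \<otimes>\<^bsub>G\<^esub> \<tau> yh \<in> C"
  using same_action_imp_C[OF y \<tau>_carrier[OF yh]] \<tau>_conjg[OF yh] same by simp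

lemma \<tau>_mult_mod:
  assumes x: "x \<in> carrier Gh" and y: "y \<in> carrier Gh"
  shows "inv\<^bsub>G\<^esub> (\<tau> x \<otimes>\<^bsub>G\<^esub> \<tau> y) \<otimes>\<^bsub>G\<^esub> \<tau> (x \<otimes>\<^bsub>Gh\<^esub> y) \<in> C"
proof (rule same_action_imp_C)
  show "\<tau> x \<otimes>\<^bsub>G\<^esub> \<tau> y \<in> carrier G" "\<tau> (x \<otimes>\<^bsub>Gh\<^esub> y) \<in> carrier G"
    using \<tau>_carrier x y by simp_all
  fix n assume n: "n \<in> N"
  have "conjg G (\<tau> x \<otimes>\<^bsub>G\<^esub> \<tau> y) n = conjg Gh x (conjg Gh y n)"
    using G.conjg_mult \<tau>_carrier x y carrier_G[OF n] \<tau>_conjg conjg_closed_Gh n by simp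
  also have "\<dots> = conjg G (\<tau> (x \<otimes>\<^bsub>Gh\<^esub> y)) n"
    using Gh.conjg_mult x y carrier_Gh[OF n] \<tau>_conjg n by simp
  finally show "conjg G (\<tau> x \<otimes>\<^bsub>G\<^esub> \<tau> y) n = conjg G (\<tau> (x \<otimes>\<^bsub>Gh\<^esub> y)) n" .
qed

lemma \<tau>_surj_mod: "y \<in> carrier G \<Longrightarrow> \<exists>yh\<in>carrier Gh. inv\<^bsub>G\<^esub> y \<otimes>\<^bsub>G\<^esub> \<tau> yh \<in> C"
  using conj_image_eqD[OF same_actions[symmetric]] \<tau>_same_action_C by metis

lemma \<tau>_surj_mod_H: "y \<in> H \<Longrightarrow> \<exists>yh\<in>Hh. inv\<^bsub>G\<^esub> y \<otimes>\<^bsub>G\<^esub> \<tau> yh \<in> C"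
  using conj_image_eqD[OF same_actions_H[symmetric]] \<tau>_same_action_C H_carrier Hh_carrier by metis

lemma \<tau>_conjg_mod:
  assumes x: "x \<in> carrier Gh" and y: "y \<in> carrier G" and yh: "yh \<in> carrier Gh"
    and y_yh: "inv\<^bsub>G\<^esub> y \<otimes>\<^bsub>G\<^esub> \<tau> yh \<in> C"
  shows "inv\<^bsub>G\<^esub> (conjg G (\<tau> x) y) \<otimes>\<^bsub>G\<^esub> \<tau> (conjg Gh x yh) \<in> C"
proof (rule same_action_imp_C)
  show "conjg G (\<tau> x) y \<in> carrier G" "\<tau> (conjg Gh x yh) \<in> carrier G"
    using \<tau>_carrier x y yh by simp_all
  fix n assume n: "n \<in> N"
  define m where "m = conjg Gh (inv\<^bsub>Gh\<^esub> x) n"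
  have m: "m \<in> N" and xm: "conjg Gh x m = n"
    unfolding m_def using conjg_closed_Gh x n carrier_Gh by auto
  have "conjg G (inv\<^bsub>G\<^esub> (\<tau> x)) n = m"
    using xm \<tau>_conjg[OF x m] \<tau>_carrier[OF x] carrier_G[OF m] by (metis G.conjg_inv_conjg)
  then have "conjg G (conjg G (\<tau> x) y) n = conjg G (\<tau> x) (conjg G y m)"
    using G.conjg_conjg \<tau>_carrier[OF x] y carrier_G[OF n] by simp
  also have "conjg G y m = conjg G (y \<otimes>\<^bsub>G\<^esub> (inv\<^bsub>G\<^esub> y \<otimes>\<^bsub>G\<^esub> \<tau> yh)) m"
    using C_same_action[OF y_yh y m] by simp
  also have "\<dots> = conjg Gh yh m"
    using y \<tau>_carrier[OF yh] \<tau>_conjg[OF yh m] by (simp add: G.m_assoc[symmetric])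
  also have "conjg G (\<tau> x) (conjg Gh yh m) = conjg Gh (conjg Gh x yh) n"
    using \<tau>_conjg[OF x] conjg_closed_Gh[OF yh m] Gh.conjg_conjg x yh carrier_Gh[OF n] m_def by simp
  also have "\<dots> = conjg G (\<tau> (conjg Gh x yh)) n"
    using \<tau>_conjg x yh n by simp
  finally show "conjg G (conjg G (\<tau> x) y) n = conjg G (\<tau> (conjg Gh x yh)) n" .
qed

end

context lift_setting
begin

lemma action_lift_G: "action_lift G Gh N \<tau>"
  by unfold_locales (auto simp: \<tau>_carrier \<tau>_conjg \<tau>_mult_left \<tau>_one)

lemma action_lift_H: "action_lift GH GHh M \<tau>"
proof (intro action_lift.intro common_normal_subgroup.intro action_lift_axioms.intro
    common_normal_subgroup_axioms.intro)
  show "group GH" "group GHh"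
    using G.subgroup_imp_group[OF H_subgroup] Gh.subgroup_imp_group[OF Hh_subgroup] .
  show "M \<lhd> GH" "M \<lhd> GHh"
    using M_normal_GH M_normal_GHh .
  show "a \<otimes>\<^bsub>GHh\<^esub> b = a \<otimes>\<^bsub>GH\<^esub> b" if "a \<in> M" "b \<in> M" for a b
    using that mult_eq N_inter_H by auto
  show "\<tau> g \<in> carrier GH" if "g \<in> carrier GHh" for g
    using that \<tau>_H by simp
  show "conjg GH (\<tau> g) k = conjg GHh g k" if "g \<in> carrier GHh" "k \<in> M" for g k
    using that \<tau>_H \<tau>_conjg Hh_carrier N_inter_H G.conjg_subgroup[OF H_subgroup]
      Gh.conjg_subgroup[OF Hh_subgroup] by auto
  show "\<tau> (k \<otimes>\<^bsub>GHh\<^esub> g) = k \<otimes>\<^bsub>GH\<^esub> \<tau> g" if "k \<in> M" "g \<in> carrier GHh" for g k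
    using that \<tau>_mult_left Hh_carrier N_inter_H by auto
  show "\<tau> \<one>\<^bsub>GHh\<^esub> = \<one>\<^bsub>GH\<^esub>"
    using \<tau>_one by simp
qed

sublocale lifted: action_lift G Gh N \<tau>
  by (rule action_lift_G)

sublocale lifted_sub: action_lift GH GHh M \<tau>
  by (rule action_lift_H)

lemma stab_pairs_lift_iff:
  assumes L: "L \<subseteq> N" and h: "h \<in> Hh"
  shows "(h, \<sigma>) \<in> stab_pairs p Hh Gh L \<psi> \<longleftrightarrow> (\<tau> h, \<sigma>) \<in> stab_pairs p H G L \<psi>"
proof -
  have "\<forall>n\<in>L. conjg G (\<tau> h) n = conjg Gh h n"
    using L \<tau>_conjg[OF Hh_carrier[OF h]] by blast
  then show ?thesis
    unfolding stab_pairs_def using \<tau>_H[OF h] h by auto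
qed

lemma stab_pairs_lift:
  assumes "stab_pairs p H G N \<theta> = stab_pairs p H G M \<phi>"
  shows "stab_pairs p Hh Gh N \<theta> = stab_pairs p Hh Gh M \<phi>"
proof -
  have "(h, \<sigma>) \<in> stab_pairs p Hh Gh N \<theta> \<longleftrightarrow> (h, \<sigma>) \<in> stab_pairs p Hh Gh M \<phi>" for h \<sigma>
  proof (cases "h \<in> Hh")
    case True
    then show ?thesis
      using stab_pairs_lift_iff[OF _ True] assms N_inter_H by blast
  next
    case False
    then show ?thesis
      unfolding stab_pairs_def by simp
  qed
  then show ?thesis
    by auto
qed

end

locale lift_proj = lift_setting G Gh N M H Hh for G Gh :: "'a monoid" and N M H Hh +
  fixes \<theta> \<phi> :: "'a \<Rightarrow> complex" and d d' :: nat and P P' :: "'a \<Rightarrow> complex mat"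
    and \<alpha> \<alpha>' :: "'a \<Rightarrow> 'a \<Rightarrow> complex"
  assumes finite_G: "finite (carrier G)"
    and P_assoc: "assoc_proj G N \<theta> d P \<alpha>" and P'_assoc: "assoc_proj (G\<lparr>carrier := H\<rparr>) M \<phi> d' P' \<alpha>'"
    and d_pos: "d > 0" and d'_pos: "d' > 0"
    and \<alpha>_root: "\<And>x y. x \<in> stab G N \<theta> \<Longrightarrow> y \<in> stab G N \<theta> \<Longrightarrow> root_of_unity (\<alpha> x y)"
    and \<alpha>'_root: "\<And>x y. x \<in> stab (G\<lparr>carrier := H\<rparr>) M \<phi> \<Longrightarrow> y \<in> stab (G\<lparr>carrier := H\<rparr>) M \<phi> \<Longrightarrow>
      root_of_unity (\<alpha>' x y)"
    and \<alpha>_eq: "\<And>x y. x \<in> H \<inter> stab G N \<theta> \<Longrightarrow> y \<in> H \<inter> stab G N \<theta> \<Longrightarrow> \<alpha> x y = \<alpha>' x y"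
    and P_P'_centralizer: "\<And>c. c \<in> centralizer_in G N \<Longrightarrow> \<exists>z. P c = z \<cdot>\<^sub>m 1\<^sub>m d \<and> P' c = z \<cdot>\<^sub>m 1\<^sub>m d'"
begin

definition \<zeta> :: "'a \<Rightarrow> complex" where
  "\<zeta> c = P c $$ (0, 0)"

lemma P_centralizer:
  assumes c: "c \<in> C"
  shows "P c = \<zeta> c \<cdot>\<^sub>m 1\<^sub>m d" "P' c = \<zeta> c \<cdot>\<^sub>m 1\<^sub>m d'"
proof -
  obtain z where z: "P c = z \<cdot>\<^sub>m 1\<^sub>m d" "P' c = z \<cdot>\<^sub>m 1\<^sub>m d'"
    using P_P'_centralizer[OF c] by blast
  moreover have "\<zeta> c = z"
    unfolding \<zeta>_def z(1) using d_pos by simp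
  ultimately show "P c = \<zeta> c \<cdot>\<^sub>m 1\<^sub>m d" "P' c = \<zeta> c \<cdot>\<^sub>m 1\<^sub>m d'"
    by simp_all
qed

lemma C_subset_stab: "C \<subseteq> stab G N \<theta>"
  unfolding stab_def using G.centralizer_in_conjg[OF N_subset_G] by (auto simp: centralizer_in_def)

lemma \<zeta>_root: "c \<in> C \<Longrightarrow> root_of_unity (\<zeta> c)"
proof -
  interpret proj_rep G N \<theta> d P \<alpha>
    by (intro proj_rep.intro proj_rep_axioms.intro G.group_axioms normal_G P_assoc d_pos)
  show "c \<in> C \<Longrightarrow> root_of_unity (\<zeta> c)"
    using scalar_root_of_unity[OF finite_G \<alpha>_root] C_subset_stab P_centralizer by blast
qed

sublocale lifted: proj_lift G Gh N \<theta> d P \<alpha> \<tau> C \<zeta>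
proof (intro proj_lift.intro proj_rep.intro proj_rep_axioms.intro proj_lift_axioms.intro
    action_lift_G G.group_axioms normal_G P_assoc d_pos)
  show "root_of_unity (\<alpha> x y)" if "x \<in> stab G N \<theta>" "y \<in> stab G N \<theta>" for x y
    using \<alpha>_root that .
  show "C \<subseteq> carrier G" "\<one>\<^bsub>G\<^esub> \<in> C"
    using G.one_in_centralizer_in[OF N_subset_G] by (auto simp: centralizer_in_def)
  show "conjg G c k = k" if "c \<in> C" "k \<in> N" for c k
    using G.centralizer_in_conjg[OF N_subset_G] that .
  show "P c = \<zeta> c \<cdot>\<^sub>m 1\<^sub>m d" "root_of_unity (\<zeta> c)" if "c \<in> C" for c
    using that P_centralizer \<zeta>_root by auto
  show "inv\<^bsub>G\<^esub> (\<tau> x \<otimes>\<^bsub>G\<^esub> \<tau> y) \<otimes>\<^bsub>G\<^esub> \<tau> (x \<otimes>\<^bsub>Gh\<^esub> y) \<in> C" if "x \<in> carrier Gh" "y \<in> carrier Gh" for x y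
    using \<tau>_mult_mod that .
  show "\<exists>yh\<in>carrier Gh. inv\<^bsub>G\<^esub> y \<otimes>\<^bsub>G\<^esub> \<tau> yh \<in> C" if "y \<in> carrier G" for y
    using \<tau>_surj_mod that .
  show "inv\<^bsub>G\<^esub> (conjg G (\<tau> x) y) \<otimes>\<^bsub>G\<^esub> \<tau> (conjg Gh x yh) \<in> C"
    if "x \<in> carrier Gh" "y \<in> carrier G" "yh \<in> carrier Gh" "inv\<^bsub>G\<^esub> y \<otimes>\<^bsub>G\<^esub> \<tau> yh \<in> C" for x y yh
    using \<tau>_conjg_mod that .
qed

sublocale lifted_sub: proj_lift GH GHh M \<phi> d' P' \<alpha>' \<tau> C \<zeta>
proof (intro proj_lift.intro proj_rep.intro proj_rep_axioms.intro proj_lift_axioms.intro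
    action_lift_H M_normal_GH P'_assoc d'_pos)
  show "group GH"
    using G.subgroup_imp_group[OF H_subgroup] .
  show "root_of_unity (\<alpha>' x y)" if "x \<in> stab GH M \<phi>" "y \<in> stab GH M \<phi>" for x y
    using \<alpha>'_root that .
  show "C \<subseteq> carrier GH" "\<one>\<^bsub>GH\<^esub> \<in> C"
    using centralizer_subset_H G.one_in_centralizer_in[OF N_subset_G] by auto
  show "conjg GH c k = k" if "c \<in> C" "k \<in> M" for c k
    using that centralizer_subset_H G.conjg_subgroup[OF H_subgroup] N_inter_H
      G.centralizer_in_conjg[OF N_subset_G] by auto
  show "P' c = \<zeta> c \<cdot>\<^sub>m 1\<^sub>m d'" "root_of_unity (\<zeta> c)" if "c \<in> C" for c
    using that P_centralizer \<zeta>_root by auto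
  show "inv\<^bsub>GH\<^esub> (\<tau> x \<otimes>\<^bsub>GH\<^esub> \<tau> y) \<otimes>\<^bsub>GH\<^esub> \<tau> (x \<otimes>\<^bsub>GHh\<^esub> y) \<in> C"
    if "x \<in> carrier GHh" "y \<in> carrier GHh" for x y
  proof -
    have "\<tau> x \<otimes>\<^bsub>G\<^esub> \<tau> y \<in> H"
      using that \<tau>_H subgroup.m_closed[OF H_subgroup] by simp
    then show ?thesis
      using that \<tau>_mult_mod Hh_carrier G.m_inv_consistent[OF H_subgroup] by simp
  qed
  show "\<exists>yh\<in>carrier GHh. inv\<^bsub>GH\<^esub> y \<otimes>\<^bsub>GH\<^esub> \<tau> yh \<in> C" if "y \<in> carrier GH" for y
    using that \<tau>_surj_mod_H G.m_inv_consistent[OF H_subgroup] by simp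
  show "inv\<^bsub>GH\<^esub> (conjg GH (\<tau> x) y) \<otimes>\<^bsub>GH\<^esub> \<tau> (conjg GHh x yh) \<in> C"
    if x: "x \<in> carrier GHh" and y: "y \<in> carrier GH" and yh: "yh \<in> carrier GHh"
      and y_yh: "inv\<^bsub>GH\<^esub> y \<otimes>\<^bsub>GH\<^esub> \<tau> yh \<in> C" for x y yh
  proof -
    have xyh: "x \<in> Hh" "y \<in> H" "yh \<in> Hh"
      using x y yh by simp_all
    have "conjg G (\<tau> x) y \<in> H"
      using xyh \<tau>_H unfolding conjg_def
      by (auto intro!: subgroup.m_closed[OF H_subgroup] subgroup.m_inv_closed[OF H_subgroup])
    moreover have "inv\<^bsub>G\<^esub> y \<otimes>\<^bsub>G\<^esub> \<tau> yh \<in> C"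
      using y_yh xyh G.m_inv_consistent[OF H_subgroup] by simp
    ultimately show ?thesis
      using \<tau>_conjg_mod[of x y yh] xyh Hh_carrier H_carrier \<tau>_H G.m_inv_consistent[OF H_subgroup]
        G.conjg_subgroup[OF H_subgroup] Gh.conjg_subgroup[OF Hh_subgroup] by simp
  qed
qed

end

context lift_proj
begin

lemma \<tau>_stab_H: "y \<in> Hh \<inter> stab Gh N \<theta> \<Longrightarrow> \<tau> y \<in> H \<inter> stab G N \<theta>"
  using \<tau>_H lifted.\<tau>_stab_iff Hh_carrier by blast

lemma rescale_agree:
  assumes a: "a \<in> H \<inter> stab G N \<theta>" and b: "b \<in> H" and ab: "inv\<^bsub>G\<^esub> a \<otimes>\<^bsub>G\<^esub> b \<in> C"
  shows "lifted_sub.rescale a b = lifted.rescale a b"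
proof -
  have "inv\<^bsub>G\<^esub> a \<otimes>\<^bsub>G\<^esub> b \<in> H \<inter> stab G N \<theta>"
    using ab centralizer_subset_H C_subset_stab by blast
  then show ?thesis
    unfolding lifted.rescale_def lifted_sub.rescale_def
    using a \<alpha>_eq G.m_inv_consistent[OF H_subgroup] by simp
qed

lemma lifted_\<alpha>_root: "\<forall>x\<in>stab Gh N \<theta>. \<forall>y\<in>stab Gh N \<theta>. root_of_unity (lifted.\<alpha>_lift x y)"
  using lifted.\<alpha>_lift_root by blast

lemma lifted_sub_\<alpha>_root: "\<forall>x\<in>stab GHh M \<phi>. \<forall>y\<in>stab GHh M \<phi>. root_of_unity (lifted_sub.\<alpha>_lift x y)"
  using lifted_sub.\<alpha>_lift_root by blast

lemma lifted_\<alpha>_agree: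
  "\<forall>x\<in>Hh \<inter> stab Gh N \<theta>. \<forall>y\<in>Hh \<inter> stab Gh N \<theta>. lifted.\<alpha>_lift x y = lifted_sub.\<alpha>_lift x y"
proof (intro ballI)
  fix x y assume x: "x \<in> Hh \<inter> stab Gh N \<theta>" and y: "y \<in> Hh \<inter> stab Gh N \<theta>"
  have \<tau>x: "\<tau> x \<in> H \<inter> stab G N \<theta>" and \<tau>y: "\<tau> y \<in> H \<inter> stab G N \<theta>"
    using \<tau>_stab_H x y by auto
  then have "\<tau> x \<otimes>\<^bsub>G\<^esub> \<tau> y \<in> H \<inter> stab G N \<theta>"
    using subgroup.m_closed[OF H_subgroup] subgroup.m_closed[OF lifted.stab_subgroup] by blast
  moreover have "\<tau> (x \<otimes>\<^bsub>Gh\<^esub> y) \<in> H"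
    using x y \<tau>_H subgroup.m_closed[OF Hh_subgroup] by blast
  moreover have "inv\<^bsub>G\<^esub> (\<tau> x \<otimes>\<^bsub>G\<^esub> \<tau> y) \<otimes>\<^bsub>G\<^esub> \<tau> (x \<otimes>\<^bsub>Gh\<^esub> y) \<in> C"
    using \<tau>_mult_mod x y Hh_carrier by blast
  ultimately show "lifted.\<alpha>_lift x y = lifted_sub.\<alpha>_lift x y"
    unfolding lifted.\<alpha>_lift_def lifted_sub.\<alpha>_lift_def using rescale_agree \<alpha>_eq \<tau>x \<tau>y by simp
qed

lemma lifted_centralizer_scalar:
  "\<forall>c\<in>centralizer_in Gh N. \<exists>z. P (\<tau> c) = z \<cdot>\<^sub>m 1\<^sub>m d \<and> P' (\<tau> c) = z \<cdot>\<^sub>m 1\<^sub>m d'"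
proof
  fix c assume c: "c \<in> centralizer_in Gh N"
  then have cc: "c \<in> carrier Gh"
    by (simp add: centralizer_in_def)
  have "inv\<^bsub>G\<^esub> \<one>\<^bsub>G\<^esub> \<otimes>\<^bsub>G\<^esub> \<tau> c \<in> C"
    using same_action_imp_C[OF G.one_closed \<tau>_carrier[OF cc]] \<tau>_conjg[OF cc]
      Gh.centralizer_in_conjg[OF N_subset_Gh c] carrier_G by simp
  then have "\<tau> c \<in> C"
    using \<tau>_carrier[OF cc] by simp
  then show "\<exists>z. P (\<tau> c) = z \<cdot>\<^sub>m 1\<^sub>m d \<and> P' (\<tau> c) = z \<cdot>\<^sub>m 1\<^sub>m d'"
    using P_centralizer by blast
qed

lemma stab_lift_sub:
  assumes SP: "stab_pairs p H G N \<theta> = stab_pairs p H G M \<phi>" and y: "y \<in> Hh \<inter> stab Gh N \<theta>"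
  shows "y \<in> stab GHh M \<phi>"
proof -
  have "(\<tau> y, id) \<in> stab_pairs p H G N \<theta>"
    using \<tau>_stab_H[OF y] unfolding stab_pairs_def stab_def calH_def galQab_def
    by (auto intro!: exI[of _ 0])
  then have "\<forall>m\<in>M. \<phi> (conjg G (\<tau> y) m) = \<phi> m"
    using SP unfolding stab_pairs_def by simp
  then show ?thesis
    using y \<tau>_conjg Hh_carrier N_inter_H Gh.conjg_subgroup[OF Hh_subgroup] unfolding stab_def by auto
qed

lemma conjg_rescale_agree:
  assumes x\<sigma>: "(\<tau> x, \<sigma>) \<in> stab_pairs p H G N \<theta>" and x: "x \<in> Hh" and y: "y \<in> Hh \<inter> stab Gh N \<theta>"
  shows "lifted_sub.rescale (conjg GH (\<tau> x) (\<tau> y)) (\<tau> (conjg GHh x y))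
    = lifted.rescale (conjg G (\<tau> x) (\<tau> y)) (\<tau> (conjg Gh x y))"
proof (subst G.conjg_subgroup[OF H_subgroup \<tau>_H[OF x]], subst Gh.conjg_subgroup[OF Hh_subgroup x],
    rule rescale_agree)
  have "\<sigma> \<in> galQab" "\<And>k. k \<in> N \<Longrightarrow> \<sigma> (\<theta> (conjg G (\<tau> x) k)) = \<theta> k"
    using x\<sigma> unfolding stab_pairs_def calH_def by auto
  then show "conjg G (\<tau> x) (\<tau> y) \<in> H \<inter> stab G N \<theta>"
    using \<tau>_stab_H[OF y] \<tau>_H[OF x] H_carrier lifted.conjg_stab unfolding conjg_def
    by (auto intro!: subgroup.m_closed[OF H_subgroup] subgroup.m_inv_closed[OF H_subgroup])
  show "\<tau> (conjg Gh x y) \<in> H"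
    using x y \<tau>_H unfolding conjg_def
    by (auto intro!: subgroup.m_closed[OF Hh_subgroup] subgroup.m_inv_closed[OF Hh_subgroup])
  show "inv\<^bsub>G\<^esub> (conjg G (\<tau> x) (\<tau> y)) \<otimes>\<^bsub>G\<^esub> \<tau> (conjg Gh x y) \<in> C"
    using \<tau>_conjg_mod[OF Hh_carrier[OF x] \<tau>_carrier] Hh_carrier y \<tau>_carrier
      G.one_in_centralizer_in[OF N_subset_G] by auto
qed

lemma lifted_mu_agree:
  assumes SP: "stab_pairs p H G N \<theta> = stab_pairs p H G M \<phi>"
    and \<mu>_agree: "\<forall>(x, \<sigma>)\<in>stab_pairs p H G N \<theta>. \<forall>\<mu> \<mu>'.
      is_mu G N \<theta> d P x \<sigma> \<mu> \<longrightarrow> is_mu GH M \<phi> d' P' x \<sigma> \<mu>' \<longrightarrow> (\<forall>y\<in>H \<inter> stab G N \<theta>. \<mu> y = \<mu>' y)"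
  shows "\<forall>(x, \<sigma>)\<in>stab_pairs p Hh Gh N \<theta>. \<forall>\<mu> \<mu>'.
      is_mu Gh N \<theta> d (\<lambda>g. P (\<tau> g)) x \<sigma> \<mu> \<longrightarrow> is_mu GHh M \<phi> d' (\<lambda>g. P' (\<tau> g)) x \<sigma> \<mu>' \<longrightarrow>
      (\<forall>y\<in>Hh \<inter> stab Gh N \<theta>. \<mu> y = \<mu>' y)"
proof (intro ballI allI impI, clarify)
  fix x \<sigma> \<mu>h \<mu>h' y
  assume x\<sigma>: "(x, \<sigma>) \<in> stab_pairs p Hh Gh N \<theta>"
    and \<mu>h: "is_mu Gh N \<theta> d (\<lambda>g. P (\<tau> g)) x \<sigma> \<mu>h"
    and \<mu>h': "is_mu GHh M \<phi> d' (\<lambda>g. P' (\<tau> g)) x \<sigma> \<mu>h'"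
    and y: "y \<in> Hh" "y \<in> stab Gh N \<theta>"
  have x: "x \<in> Hh" and \<sigma>: "\<sigma> \<in> galQab"
    using x\<sigma> unfolding stab_pairs_def calH_def by auto
  have x\<sigma>_N: "(\<tau> x, \<sigma>) \<in> stab_pairs p H G N \<theta>"
    using stab_pairs_lift_iff[OF _ x] x\<sigma> by blast
  have stable: "\<sigma> (\<theta> (conjg G (\<tau> x) k)) = \<theta> k" if "k \<in> N" for k
    using x\<sigma>_N that unfolding stab_pairs_def by auto
  have "(\<tau> x, \<sigma>) \<in> stab_pairs p H G M \<phi>"
    using x\<sigma>_N SP by simp
  then have stable': "\<sigma> (\<phi> (conjg GH (\<tau> x) m)) = \<phi> m" if "m \<in> M" for m
    using that \<tau>_H[OF x] G.conjg_subgroup[OF H_subgroup] unfolding stab_pairs_def by auto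
  obtain \<mu> where \<mu>: "is_mu G N \<theta> d P (\<tau> x) \<sigma> \<mu>"
    and \<mu>h_eq: "\<And>yh. yh \<in> stab Gh N \<theta> \<Longrightarrow>
      \<mu>h yh = \<sigma> (lifted.rescale (conjg G (\<tau> x) (\<tau> yh)) (\<tau> (conjg Gh x yh))) * \<mu> (\<tau> yh)"
    using lifted.mu_lift[OF Hh_carrier[OF x] \<sigma> stable \<mu>h] by blast
  obtain \<mu>' where \<mu>': "is_mu GH M \<phi> d' P' (\<tau> x) \<sigma> \<mu>'"
    and \<mu>h'_eq: "\<And>yh. yh \<in> stab GHh M \<phi> \<Longrightarrow>
      \<mu>h' yh = \<sigma> (lifted_sub.rescale (conjg GH (\<tau> x) (\<tau> yh)) (\<tau> (conjg GHh x yh))) * \<mu>' (\<tau> yh)"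
    using lifted_sub.mu_lift[of x \<sigma> \<mu>h'] x \<sigma> stable' \<mu>h' by auto
  have "\<mu> (\<tau> y) = \<mu>' (\<tau> y)"
    using \<mu>_agree x\<sigma>_N \<mu> \<mu>' \<tau>_stab_H y by blast
  then show "\<mu>h y = \<mu>h' y"
    using \<mu>h_eq[OF y(2)] \<mu>h'_eq[OF stab_lift_sub[OF SP]] conjg_rescale_agree[OF x\<sigma>_N x] y by simp
qed

end

context lift_setting
begin

lemma geq_c_lift:
  assumes fin: "finite (carrier G)" and geq: "geq_c p G N \<theta> H M \<phi>"
  shows "geq_c p Gh N \<theta> Hh M \<phi>"
proof -
  have HT: "H_triple p G N \<theta>" and HT': "H_triple p GH M \<phi>"
    and SP: "stab_pairs p H G N \<theta> = stab_pairs p H G M \<phi>"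
    using geq unfolding geq_c_def by blast+
  obtain d P \<alpha> d' P' \<alpha>' where P: "assoc_proj G N \<theta> d P \<alpha>" and P': "assoc_proj GH M \<phi> d' P' \<alpha>'"
    and roots: "\<forall>x\<in>stab G N \<theta>. \<forall>y\<in>stab G N \<theta>. root_of_unity (\<alpha> x y)"
    and roots': "\<forall>x\<in>stab GH M \<phi>. \<forall>y\<in>stab GH M \<phi>. root_of_unity (\<alpha>' x y)"
    and \<alpha>_eq: "\<forall>x\<in>H \<inter> stab G N \<theta>. \<forall>y\<in>H \<inter> stab G N \<theta>. \<alpha> x y = \<alpha>' x y"
    and scalar: "\<forall>c\<in>C. \<exists>z. P c = z \<cdot>\<^sub>m 1\<^sub>m d \<and> P' c = z \<cdot>\<^sub>m 1\<^sub>m d'"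
    and \<mu>_agree: "\<forall>(x, \<sigma>)\<in>stab_pairs p H G N \<theta>. \<forall>\<mu> \<mu>'.
      is_mu G N \<theta> d P x \<sigma> \<mu> \<longrightarrow> is_mu GH M \<phi> d' P' x \<sigma> \<mu>' \<longrightarrow> (\<forall>y\<in>H \<inter> stab G N \<theta>. \<mu> y = \<mu>' y)"
    using geq unfolding geq_c_def by (elim conjE exE)
  have "d > 0"
    using assoc_proj_degree_pos[OF _ P] HT subgroup.one_closed[OF subgroup_G]
    unfolding H_triple_def by blast
  moreover have "d' > 0"
    using assoc_proj_degree_pos[OF _ P'] HT' subgroup.one_closed[OF subgroup_G]
      subgroup.one_closed[OF H_subgroup] N_inter_H unfolding H_triple_def by auto
  ultimately interpret lift_proj G Gh N M H Hh \<theta> \<phi> d d' P P' \<alpha> \<alpha>'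
    using fin P P' roots roots' \<alpha>_eq scalar by unfold_locales blast+
  show ?thesis
    unfolding geq_c_def
    by (intro conjI exI[of _ d] exI[of _ "\<lambda>g. P (\<tau> g)"] exI[of _ lifted.\<alpha>_lift]
        exI[of _ d'] exI[of _ "\<lambda>g. P' (\<tau> g)"] exI[of _ lifted_sub.\<alpha>_lift]
        lifted.H_triple_lift[OF HT] lifted_sub.H_triple_lift[OF HT'] Hh_subgroup N_Hh_product
        N_inter_Hh centralizer_Gh_subset_Hh stab_pairs_lift[OF SP] lifted.lift_assoc_proj
        lifted_sub.lift_assoc_proj lifted_\<alpha>_root lifted_sub_\<alpha>_root lifted_\<alpha>_agree
        lifted_centralizer_scalar lifted_mu_agree[OF SP \<mu>_agree])
qed

end

theorem theorem2p9:
  fixes p :: nat and G Gh :: "'a monoid" and N M H Hh :: "'a set"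
    and \<theta> \<phi> :: "'a \<Rightarrow> complex"
  assumes "prime p"
    and "group G" and "finite (carrier G)"
    and "geq_c p G N \<theta> H M \<phi>"
    and "group Gh" and "finite (carrier Gh)"
    and "N \<lhd> Gh"
    and "\<forall>a\<in>N. \<forall>b\<in>N. a \<otimes>\<^bsub>Gh\<^esub> b = a \<otimes>\<^bsub>G\<^esub> b"
    and "conj_image Gh N (carrier Gh) = conj_image G N (carrier G)"
    and "subgroup Hh Gh"
    and "M <#>\<^bsub>Gh\<^esub> centralizer_in Gh N \<subseteq> Hh"
    and "conj_image Gh N Hh = conj_image G N H"
  shows "geq_c p Gh N \<theta> Hh M \<phi>"
proof -
  have HT: "H_triple p G N \<theta>"
    and H: "subgroup H G" "N <#>\<^bsub>G\<^esub> H = carrier G" "N \<inter> H = M" "centralizer_in G N \<subseteq> H"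
    using assms(4) unfolding geq_c_def by blast+
  have N: "N \<lhd> G"
    using HT unfolding H_triple_def by blast
  have mult: "\<And>a b. a \<in> N \<Longrightarrow> b \<in> N \<Longrightarrow> a \<otimes>\<^bsub>Gh\<^esub> b = a \<otimes>\<^bsub>G\<^esub> b"
    using assms(8) by blast
  interpret lift_setting G Gh N M H Hh
    by (intro lift_setting.intro common_normal_subgroup.intro common_normal_subgroup_axioms.intro
        lift_setting_axioms.intro assms(2,5,7,9-12) N H mult)
  show ?thesis
    using geq_c_lift assms(3,4) .
qed

end
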